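(* Let $R_1,R_2$ be discrete valuation domains with maximal ideals $P_1=R_1p_1$ and $P_2=R_2p_2$, let $\overline{R}$ be a field and $\mathcal{V}_i:R_i\to\overline{R}$ ($i=1,2$) surjective ring homomorphisms with $\ker\mathcal{V}_i=P_i$, and let $R=\{(r_1,r_2)\in R_1\times R_2:\mathcal{V}_1(r_1)=\mathcal{V}_2(r_2)\}$ be the pullback ring. Then every non-zero indecomposable separated pseudo-absorbing primary multiplication $R$-module is isomorphic to one of the following $R$-modules: (1) $R$; (2) $(R_1/P_1^n\to\overline{R}\leftarrow R_2/P_2^m)$; (3) $(R_1\to\overline{R}\leftarrow R_2/P_2^m)$; (4) $(R_1/P_1^n\to\overline{R}\leftarrow R_2)$; where $m,n\geq 1$ are integers.
   Context: $R$ is a commutative local ring with maximal ideal $P=P_1\oplus P_2=\{(a,b):a\in P_1,b\in P_2\}$. For integers $n,m\ge1$ write $P_1^n\oplus 0=\{(a,0):a\in P_1^n\}$, $0\oplus P_2^m=\{(0,b):b\in P_2^m\}$, $P_1^n\oplus P_2^m=\{(a,b):a\in P_1^n,b\in P_2^m\}$; these are ideals of $R$. For an $R$-module $S$, $P_1S$ means $(P_1\oplus 0)S$ and $P_2S$ means $(0\oplus P_2)S$. An $R$-module $S$ is separated if $P_1S\cap P_2S=0$. For an $R_1$-module $A$ and an $R_2$-module $B$ together with surjections $g:A\to\overline{R}$, $h:B\to\overline{R}$ (here always the natural maps induced by $\mathcal{V}_1$, $\mathcal{V}_2$ on $R_1$, $R_1/P_1^n$, $R_2$, $R_2/P_2^m$),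 the notation $(A\to\overline{R}\leftarrow B)$ denotes the $R$-module $\{(a,b)\in A\oplus B: g(a)=h(b)\}$ with $(r_1,r_2)(a,b)=(r_1a,r_2b)$. A proper ideal $I$ of a commutative ring is 2-absorbing primary if whenever $abc\in I$ then $ab\in I$ or $ac\in\sqrt I$ or $bc\in\sqrt I$. A proper submodule $N$ of an $R$-module $M$ is pseudo-absorbing primary if $(N:_RM)=\{r\in R: rM\subseteq N\}$ is a 2-absorbing primary ideal of $R$. $M$ is a pseudo-absorbing primary multiplication module if for every pseudo-absorbing primary submodule $N$ of $M$ there is an ideal $I$ of $R$ with $N=IM$. *)

theory Defs
  imports "HOL-Algebra.Algebra"
begin

definition dvr :: "('a, 'b) ring_scheme \<Rightarrow> bool" where
  "dvr R \<longleftrightarrow> principal_domain R \<and> (\<exists>!P. maximalideal P R) \<and> \<not> field R"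

definition pb_ring ::
  "('a, 'x) ring_scheme \<Rightarrow> ('b, 'y) ring_scheme \<Rightarrow> ('a \<Rightarrow> 'c) \<Rightarrow> ('b \<Rightarrow> 'c) \<Rightarrow> ('a \<times> 'b) ring" where
  "pb_ring R1 R2 V1 V2 =
    \<lparr>carrier = {(a, b). a \<in> carrier R1 \<and> b \<in> carrier R2 \<and> V1 a = V2 b},
     monoid.mult = (\<lambda>x y. (fst x \<otimes>\<^bsub>R1\<^esub> fst y, snd x \<otimes>\<^bsub>R2\<^esub> snd y)),
     monoid.one = (\<one>\<^bsub>R1\<^esub>, \<one>\<^bsub>R2\<^esub>),
     ring.zero = (\<zero>\<^bsub>R1\<^esub>, \<zero>\<^bsub>R2\<^esub>),
     ring.add = (\<lambda>x y. (fst x \<oplus>\<^bsub>R1\<^esub> fst y, snd x \<oplus>\<^bsub>R2\<^esub> snd y))\<rparr>"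

text \<open>The R-module (R1/I1 \<rightarrow> Rbar \<leftarrow> R2/I2) (for ideals I1 \<subseteq> P1, I2 \<subseteq> P2), realised with
  elements pairs of cosets (X, Y) with V1-image of X equal to V2-image of Y, and
  (r1,r2)(X,Y) = (r1 X, r2 Y). Taking I1 = {0} gives R1 itself (up to the canonical
  isomorphism R1 \<cong> R1/{0}), and similarly for R2.\<close>
definition pb_module ::
  "('a, 'x) ring_scheme \<Rightarrow> ('b, 'y) ring_scheme \<Rightarrow> ('a \<Rightarrow> 'c) \<Rightarrow> ('b \<Rightarrow> 'c) \<Rightarrow> 'a set \<Rightarrow> 'b set
     \<Rightarrow> ('a \<times> 'b, 'a set \<times> 'b set) module" where
  "pb_module R1 R2 V1 V2 I1 I2 =
    \<lparr>carrier = {(I1 +>\<^bsub>R1\<^esub> a, I2 +>\<^bsub>R2\<^esub> b) | a b.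
                  a \<in> carrier R1 \<and> b \<in> carrier R2 \<and> V1 a = V2 b},
     monoid.mult = (\<lambda>A B. (rcoset_mult R1 I1 (fst A) (fst B), rcoset_mult R2 I2 (snd A) (snd B))),
     monoid.one = (I1 +>\<^bsub>R1\<^esub> \<one>\<^bsub>R1\<^esub>, I2 +>\<^bsub>R2\<^esub> \<one>\<^bsub>R2\<^esub>),
     ring.zero = (I1, I2),
     ring.add = (\<lambda>A B. (fst A <+>\<^bsub>R1\<^esub> fst B, snd A <+>\<^bsub>R2\<^esub> snd B)),
     module.smult = (\<lambda>r A. (rcoset_mult R1 I1 (I1 +>\<^bsub>R1\<^esub> fst r) (fst A),
                     rcoset_mult R2 I2 (I2 +>\<^bsub>R2\<^esub> snd r) (snd A)))\<rparr>"

definition mod_iso ::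
  "('r, 'x) ring_scheme \<Rightarrow> ('r, 'm, 'u) module_scheme \<Rightarrow> ('r, 'n, 'v) module_scheme \<Rightarrow> bool" where
  "mod_iso R M N \<longleftrightarrow> (\<exists>f. bij_betw f (carrier M) (carrier N) \<and>
      (\<forall>x\<in>carrier M. \<forall>y\<in>carrier M. f (x \<oplus>\<^bsub>M\<^esub> y) = f x \<oplus>\<^bsub>N\<^esub> f y) \<and>
      (\<forall>r\<in>carrier R. \<forall>x\<in>carrier M. f (r \<odot>\<^bsub>M\<^esub> x) = r \<odot>\<^bsub>N\<^esub> f x))"

definition ideal_smod ::
  "('r, 'x) ring_scheme \<Rightarrow> ('r, 'm, 'u) module_scheme \<Rightarrow> 'r set \<Rightarrow> 'm set" where
  "ideal_smod R M I = \<Inter>{N. submodule N R M \<and> (\<forall>r\<in>I. \<forall>x\<in>carrier M. r \<odot>\<^bsub>M\<^esub> x \<in> N)}"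

definition mod_colon ::
  "('r, 'x) ring_scheme \<Rightarrow> ('r, 'm, 'u) module_scheme \<Rightarrow> 'm set \<Rightarrow> 'r set" where
  "mod_colon R M N = {r \<in> carrier R. \<forall>x\<in>carrier M. r \<odot>\<^bsub>M\<^esub> x \<in> N}"

definition ideal_radical :: "('r, 'x) ring_scheme \<Rightarrow> 'r set \<Rightarrow> 'r set" where
  "ideal_radical R I = {x \<in> carrier R. \<exists>n::nat. x [^]\<^bsub>R\<^esub> n \<in> I}"

definition two_absorbing_primary :: "('r, 'x) ring_scheme \<Rightarrow> 'r set \<Rightarrow> bool" where
  "two_absorbing_primary R I \<longleftrightarrow> ideal I R \<and> I \<noteq> carrier R \<and>
     (\<forall>a\<in>carrier R. \<forall>b\<in>carrier R. \<forall>c\<in>carrier R.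
        a \<otimes>\<^bsub>R\<^esub> b \<otimes>\<^bsub>R\<^esub> c \<in> I \<longrightarrow>
        a \<otimes>\<^bsub>R\<^esub> b \<in> I \<or> a \<otimes>\<^bsub>R\<^esub> c \<in> ideal_radical R I \<or> b \<otimes>\<^bsub>R\<^esub> c \<in> ideal_radical R I)"

definition pseudo_absorbing_primary ::
  "('r, 'x) ring_scheme \<Rightarrow> ('r, 'm, 'u) module_scheme \<Rightarrow> 'm set \<Rightarrow> bool" where
  "pseudo_absorbing_primary R M N \<longleftrightarrow> submodule N R M \<and> N \<noteq> carrier M \<and>
     two_absorbing_primary R (mod_colon R M N)"

definition pap_multiplication_module ::
  "('r, 'x) ring_scheme \<Rightarrow> ('r, 'm, 'u) module_scheme \<Rightarrow> bool" where
  "pap_multiplication_module R M \<longleftrightarrow>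
     (\<forall>N. pseudo_absorbing_primary R M N \<longrightarrow> (\<exists>I. ideal I R \<and> N = ideal_smod R M I))"

definition indecomposable ::
  "('r, 'x) ring_scheme \<Rightarrow> ('r, 'm, 'u) module_scheme \<Rightarrow> bool" where
  "indecomposable R M \<longleftrightarrow> carrier M \<noteq> {\<zero>\<^bsub>M\<^esub>} \<and>
     (\<forall>N1 N2. submodule N1 R M \<and> submodule N2 R M \<and> N1 \<inter> N2 = {\<zero>\<^bsub>M\<^esub>} \<and>
        N1 <+>\<^bsub>M\<^esub> N2 = carrier M \<longrightarrow> N1 = {\<zero>\<^bsub>M\<^esub>} \<or> N2 = {\<zero>\<^bsub>M\<^esub>})"

definition separated ::
  "('a, 'x) ring_scheme \<Rightarrow> ('b, 'y) ring_scheme \<Rightarrow> 'a set \<Rightarrow> 'b set \<Rightarrow>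
   ('a \<times> 'b, 'z) ring_scheme \<Rightarrow> ('a \<times> 'b, 'm, 'u) module_scheme \<Rightarrow> bool" where
  "separated R1 R2 P1 P2 R M \<longleftrightarrow>
     ideal_smod R M {(a, \<zero>\<^bsub>R2\<^esub>) | a. a \<in> P1} \<inter> ideal_smod R M {(\<zero>\<^bsub>R1\<^esub>, b) | b. b \<in> P2}
       = {\<zero>\<^bsub>M\<^esub>}"

end

theory Submission
  imports Defs
begin

(*
  Write u1 = (p1, 0) and u2 = (0, p2). The hypothesis on M is only used for proper submodules N
  whose colon ideal (N : M) is prime: such an N is pseudo-absorbing primary, hence N = (N : M) M,
  and so N <= L for every submodule L into which (N : M) maps M.

  Indecomposability and separatedness, with a Nakayama-type argument excluding M = u1 M and
  M = u2 M, make Q = u1 M + u2 M a proper submodule; pick x outside it.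
  If Rx + Q were proper, its colon ideal would be the maximal ideal of R, which maps M into Q, so
  Rx + Q <= Q, absurd; hence M = Rx + u1 M + u2 M. The same argument with the prime ideals R u2
  and R u1 (R / R u2 is R1 with u1 as its uniformizer, and u1 lies in the Jacobson radical)
  gives M = Rx + u2 M = Rx + u1 M, and since u1 u2 = 0 this forces M = Rx.

  Finally, separatedness splits the annihilator of x as {(a, b). a : J1, b : J2} with Ji an ideal
  of Ri inside Pi, i.e. 0 or a power of Pi, and Rx, the quotient of R by this annihilator, is the
  pullback of R1/J1 and R2/J2.
*)

section \<open>Discrete valuation rings\<close>

locale uniformized_dvr = principal_domain +
  fixes p
  assumes p_closed: "p \<in> carrier R"
    and PIdl_maximal: "maximalideal (PIdl p) R"
    and maximal_unique: "\<exists>!P. maximalideal P R"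
begin

lemma one_notin_PIdl: "\<one> \<notin> PIdl p"
  using maximalideal.I_notcarr[OF PIdl_maximal] ideal.one_imp_carrier[OF cgenideal_ideal[OF p_closed]]
  by auto

lemma Units_iff_notin_PIdl:
  assumes x: "x \<in> carrier R"
  shows "x \<in> Units R \<longleftrightarrow> x \<notin> PIdl p"
proof
  assume "x \<in> Units R"
  then show "x \<notin> PIdl p"
    using one_notin_PIdl ideal.I_l_closed[OF cgenideal_ideal[OF p_closed], of x "inv x"]
    by auto
next
  assume xP: "x \<notin> PIdl p"
  show "x \<in> Units R"
  proof (rule ccontr)
    assume nu: "x \<notin> Units R"
    have "x \<noteq> \<zero>"
      using xP additive_subgroup.zero_closed[OF ideal.axioms(1)[OF cgenideal_ideal[OF p_closed]]]
      by auto
    then obtain b where b: "b \<in> carrier R" "ring_irreducible b" "b divides x"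
      using exists_irreducible_divisor[of x] x nu by blast
    have "PIdl b = PIdl p"
      using irreducible_imp_maximalideal[OF b(1,2)] PIdl_maximal maximal_unique by blast
    moreover have "x \<in> PIdl b"
      using b(3) x b(1) unfolding factor_def cgenideal_def by (auto simp: m_comm)
    ultimately show False using xP by simp
  qed
qed

lemma irreducible_eq_unit_mult:
  assumes f: "f \<in> carrier R" "ring_irreducible f"
  shows "\<exists>c\<in>Units R. f = c \<otimes> p"
proof -
  have "f \<in> PIdl p"
    using Units_iff_notin_PIdl[OF f(1)] ring_irreducibleE(4)[OF f] by blast
  then obtain c where c: "c \<in> carrier R" "f = c \<otimes> p" unfolding cgenideal_def by auto
  have "p \<notin> Units R" using Units_iff_notin_PIdl[OF p_closed] cgenideal_self[OF p_closed] by blast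
  then show ?thesis using ring_irreducibleE(5)[OF f c(1) p_closed c(2)] c by blast
qed

lemma unit_mult_pow:
  assumes x: "x \<in> carrier R" "x \<noteq> \<zero>"
  shows "\<exists>w\<in>Units R. \<exists>k::nat. x = w \<otimes> p [^] k"
proof (cases "x \<in> Units R")
  case True
  then show ?thesis by (intro bexI[of _ x] exI[of _ 0]) auto
next
  case False
  obtain fs where fs: "set fs \<subseteq> carrier (mult_of R)" "wfactors (mult_of R) fs x"
    using factorization_property[of x] x False by blast
  have prod_irreducibles: "\<exists>w\<in>Units R. foldr (\<otimes>) fs \<one> = w \<otimes> p [^] length fs"
    if "set fs \<subseteq> carrier (mult_of R)" "\<forall>f\<in>set fs. irreducible (mult_of R) f" for fs
    using that
  proof (induction fs)
    case Nil
    then show ?case by (intro bexI[of _ \<one>]) auto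
  next
    case (Cons f fs)
    then obtain w where w: "w \<in> Units R" "foldr (\<otimes>) fs \<one> = w \<otimes> p [^] length fs" by auto
    have f: "f \<in> carrier R" "ring_irreducible f" using Cons.prems ring_irreducibleI' by auto
    obtain c where c: "c \<in> Units R" "f = c \<otimes> p" using irreducible_eq_unit_mult[OF f] by blast
    have "foldr (\<otimes>) (f # fs) \<one> = (c \<otimes> w) \<otimes> p [^] length (f # fs)"
      using c w p_closed by (simp add: m_ac nat_pow_Suc2 Units_closed)
    then show ?case using c(1) w(1) by blast
  qed
  then obtain w where w: "w \<in> Units R" "foldr (\<otimes>) fs \<one> = w \<otimes> p [^] length fs"
    using prod_irreducibles[OF fs(1)] fs(2) unfolding wfactors_def by auto
  have "x \<sim> w \<otimes> p [^] length fs"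
    using fs(2) w p_closed x(1) assoc_iff_assoc_mult mult_of.associated_sym
    unfolding wfactors_def by auto
  then obtain u where u: "u \<in> Units R" "x = u \<otimes> (w \<otimes> p [^] length fs)"
    using ring_associated_iff[OF x(1)] w p_closed by (auto simp: Units_closed)
  then have "x = (u \<otimes> w) \<otimes> p [^] length fs" using w p_closed by (simp add: m_assoc Units_closed)
  then show ?thesis using u w by blast
qed

lemma PIdl_pow_cases:
  assumes JP: "J \<subseteq> PIdl p" and J0: "\<zero> \<in> J"
    and J_mult: "\<And>c a. c \<in> carrier R \<Longrightarrow> a \<in> J \<Longrightarrow> c \<otimes> a \<in> J"
  shows "J = {\<zero>} \<or> (\<exists>n::nat. n \<ge> 1 \<and> J = PIdl (p [^] n))"
proof (cases "J \<subseteq> {\<zero>}")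
  case True
  then show ?thesis using J0 by auto
next
  case False
  have J_carrier: "J \<subseteq> carrier R"
    using JP p_closed unfolding cgenideal_def by auto
  have pow_in_J: "\<exists>k. p [^] (k::nat) \<in> J \<and> b \<in> PIdl (p [^] k)" if b: "b \<in> J" "b \<noteq> \<zero>" for b
  proof -
    obtain w k where wk: "w \<in> Units R" "b = w \<otimes> p [^] (k::nat)"
      using unit_mult_pow b J_carrier by blast
    have "inv w \<otimes> b = p [^] k"
      using wk p_closed by (simp add: m_assoc[symmetric] Units_closed Units_l_inv)
    then have "p [^] k \<in> J" using J_mult[OF _ b(1), of "inv w"] wk(1) by simp
    moreover have "b \<in> PIdl (p [^] k)" using wk p_closed unfolding cgenideal_def by auto
    ultimately show ?thesis by blast
  qed
  define n where "n = (LEAST k. p [^] (k::nat) \<in> J)"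
  have pn: "p [^] n \<in> J"
    unfolding n_def using pow_in_J False J0 by (metis LeastI_ex singleton_iff subsetI)
  have "n \<noteq> 0"
  proof
    assume "n = 0"
    then have "\<one> \<in> J" using pn by simp
    then show False using JP one_notin_PIdl by blast
  qed
  moreover have "J = PIdl (p [^] n)"
  proof
    show "PIdl (p [^] n) \<subseteq> J" unfolding cgenideal_def using J_mult pn by auto
    show "J \<subseteq> PIdl (p [^] n)"
    proof
      fix b assume b: "b \<in> J"
      show "b \<in> PIdl (p [^] n)"
      proof (cases "b = \<zero>")
        case True
        then show ?thesis using p_closed unfolding cgenideal_def by (auto intro!: exI[of _ \<zero>])
      next
        case False
        then obtain k where k: "p [^] (k::nat) \<in> J" "b \<in> PIdl (p [^] k)" using pow_in_J b by blast
        have "n \<le> k" unfolding n_def using k(1) by (rule Least_le)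
        then have "p [^] k \<in> PIdl (p [^] n)"
          using p_closed unfolding cgenideal_def
          by (auto intro!: exI[of _ "p [^] (k - n)"] simp: nat_pow_mult)
        then have "PIdl (p [^] k) \<subseteq> PIdl (p [^] n)"
          by (intro cgenideal_minimal cgenideal_ideal) (simp add: p_closed)
        then show ?thesis using k(2) by blast
      qed
    qed
  qed
  ultimately show ?thesis by (intro disjI2 exI[of _ n]) auto
qed

end

lemma uniformized_dvrI:
  assumes "dvr R" "p \<in> carrier R" "maximalideal (PIdl\<^bsub>R\<^esub> p) R"
  shows "uniformized_dvr R p"
  using assms unfolding dvr_def by (intro uniformized_dvr.intro uniformized_dvr_axioms.intro) auto

section \<open>Submodules, colon ideals and the multiplication hypothesis\<close>

abbreviation smult_image :: "('r, 'm, 'u) module_scheme \<Rightarrow> 'r \<Rightarrow> 'm set"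
  where "smult_image M a \<equiv> (\<lambda>x. a \<odot>\<^bsub>M\<^esub> x) ` carrier M"

abbreviation cyclic_span :: "('r, 'x) ring_scheme \<Rightarrow> ('r, 'm, 'u) module_scheme \<Rightarrow> 'm \<Rightarrow> 'm set"
  where "cyclic_span R M x \<equiv> (\<lambda>r. r \<odot>\<^bsub>M\<^esub> x) ` carrier R"

lemma mem_set_add_iff:
  fixes G (structure)
  shows "z \<in> A <+>\<^bsub>G\<^esub> B \<longleftrightarrow> (\<exists>a\<in>A. \<exists>b\<in>B. z = a \<oplus> b)"
  unfolding set_add_def' by blast

lemma set_addE:
  fixes G (structure)
  assumes "z \<in> A <+>\<^bsub>G\<^esub> B"
  obtains a b where "a \<in> A" "b \<in> B" "z = a \<oplus> b"
  using assms unfolding mem_set_add_iff by blast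

lemma image_set_addE:
  fixes G (structure)
  assumes "z \<in> f ` A <+>\<^bsub>G\<^esub> B"
  obtains a b where "a \<in> A" "b \<in> B" "z = f a \<oplus> b"
  using assms unfolding mem_set_add_iff by blast

lemma set_add_imageE:
  fixes G (structure)
  assumes "z \<in> A <+>\<^bsub>G\<^esub> g ` B"
  obtains a b where "a \<in> A" "b \<in> B" "z = a \<oplus> g b"
  using assms unfolding mem_set_add_iff by blast

lemma image_set_add_imageE:
  fixes G (structure)
  assumes "z \<in> f ` A <+>\<^bsub>G\<^esub> g ` B"
  obtains a b where "a \<in> A" "b \<in> B" "z = f a \<oplus> g b"
  using assms unfolding mem_set_add_iff by blast

lemma set_add_imageI:
  fixes G (structure)
  shows "a \<in> A \<Longrightarrow> b \<in> B \<Longrightarrow> a \<oplus> g b \<in> A <+>\<^bsub>G\<^esub> g ` B"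
  unfolding mem_set_add_iff by blast

lemma image_set_add_imageI:
  fixes G (structure)
  shows "a \<in> A \<Longrightarrow> b \<in> B \<Longrightarrow> f a \<oplus> g b \<in> f ` A <+>\<^bsub>G\<^esub> g ` B"
  unfolding mem_set_add_iff by blast

lemma set_addI:
  fixes G (structure)
  shows "a \<in> A \<Longrightarrow> b \<in> B \<Longrightarrow> a \<oplus> b \<in> A <+>\<^bsub>G\<^esub> B"
  unfolding mem_set_add_iff by blast

lemma image_set_addI:
  fixes G (structure)
  shows "a \<in> A \<Longrightarrow> b \<in> B \<Longrightarrow> f a \<oplus> b \<in> f ` A <+>\<^bsub>G\<^esub> B"
  unfolding mem_set_add_iff by blast

lemma (in abelian_group) set_add_commute:
  assumes "A \<subseteq> carrier G" "B \<subseteq> carrier G"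
  shows "A <+>\<^bsub>G\<^esub> B = B <+>\<^bsub>G\<^esub> A"
proof -
  have swap: "C <+>\<^bsub>G\<^esub> D \<subseteq> D <+>\<^bsub>G\<^esub> C" if CD: "C \<subseteq> carrier G" "D \<subseteq> carrier G" for C D
  proof
    fix z assume "z \<in> C <+>\<^bsub>G\<^esub> D"
    then obtain c d where cd: "c \<in> C" "d \<in> D" "z = c \<oplus> d" by (rule set_addE)
    then have "z = d \<oplus> c" using CD a_comm by blast
    then show "z \<in> D <+>\<^bsub>G\<^esub> C" using cd by (simp add: set_addI)
  qed
  show ?thesis using swap[OF assms] swap[OF assms(2,1)] by blast
qed

lemma (in cring) primeideal_two_absorbing_primary:
  assumes "primeideal I R"
  shows "two_absorbing_primary R I"
proof -
  interpret primeideal I R by (rule assms)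
  have "a \<otimes> b \<in> I \<or> a \<otimes> c \<in> ideal_radical R I"
    if "a \<in> carrier R" "b \<in> carrier R" "c \<in> carrier R" "a \<otimes> b \<otimes> c \<in> I" for a b c
  proof -
    have "a \<otimes> b \<in> I \<or> c \<in> I" using I_prime that by simp
    moreover have "a \<otimes> c \<in> ideal_radical R I" if "c \<in> I"
      using that \<open>a \<in> carrier R\<close> unfolding ideal_radical_def
      by (auto intro!: exI[of _ "Suc 0"] I_l_closed)
    ultimately show ?thesis by blast
  qed
  then show ?thesis
    unfolding two_absorbing_primary_def using is_ideal I_notcarr by blast
qed

context module
begin

lemma submodule_zero_closed: "submodule N R M \<Longrightarrow> \<zero>\<^bsub>M\<^esub> \<in> N"
  using subgroup.one_closed[OF submodule.axioms(1)] by fastforce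

lemma smult_image_submodule:
  assumes a: "a \<in> carrier R"
  shows "submodule (smult_image M a) R M"
proof (rule submoduleI)
  show "\<zero>\<^bsub>M\<^esub> \<in> smult_image M a"
    using a by (intro image_eqI[of _ _ "\<zero>\<^bsub>M\<^esub>"]) auto
next
  fix y assume "y \<in> smult_image M a"
  then obtain x where x: "x \<in> carrier M" "y = a \<odot>\<^bsub>M\<^esub> x" by blast
  show "\<ominus>\<^bsub>M\<^esub> y \<in> smult_image M a"
    using x a by (intro image_eqI[of _ _ "\<ominus>\<^bsub>M\<^esub> x"]) (auto simp: smult_r_minus)
  fix b assume "b \<in> carrier R"
  then show "b \<odot>\<^bsub>M\<^esub> y \<in> smult_image M a"
    using x a by (intro image_eqI[of _ _ "b \<odot>\<^bsub>M\<^esub> x"]) (auto simp: smult_assoc1[symmetric] m_comm)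
next
  fix y z assume "y \<in> smult_image M a" "z \<in> smult_image M a"
  then obtain x w where "x \<in> carrier M" "y = a \<odot>\<^bsub>M\<^esub> x" "w \<in> carrier M" "z = a \<odot>\<^bsub>M\<^esub> w"
    by blast
  then show "y \<oplus>\<^bsub>M\<^esub> z \<in> smult_image M a"
    using a by (intro image_eqI[of _ _ "x \<oplus>\<^bsub>M\<^esub> w"]) (auto simp: smult_r_distr)
qed (use a in auto)

lemma cyclic_span_submodule:
  assumes x: "x \<in> carrier M"
  shows "submodule (cyclic_span R M x) R M"
proof (rule submoduleI)
  show "\<zero>\<^bsub>M\<^esub> \<in> cyclic_span R M x"
    using x by (intro image_eqI[of _ _ \<zero>]) auto
next
  fix y assume "y \<in> cyclic_span R M x"
  then obtain r where r: "r \<in> carrier R" "y = r \<odot>\<^bsub>M\<^esub> x" by blast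
  show "\<ominus>\<^bsub>M\<^esub> y \<in> cyclic_span R M x"
    using x r by (intro image_eqI[of _ _ "\<ominus> r"]) (auto simp: smult_l_minus)
  fix b assume "b \<in> carrier R"
  then show "b \<odot>\<^bsub>M\<^esub> y \<in> cyclic_span R M x"
    using x r by (intro image_eqI[of _ _ "b \<otimes> r"]) (auto simp: smult_assoc1)
next
  fix y z assume "y \<in> cyclic_span R M x" "z \<in> cyclic_span R M x"
  then obtain r s where "r \<in> carrier R" "y = r \<odot>\<^bsub>M\<^esub> x" "s \<in> carrier R" "z = s \<odot>\<^bsub>M\<^esub> x"
    by blast
  then show "y \<oplus>\<^bsub>M\<^esub> z \<in> cyclic_span R M x"
    using x by (intro image_eqI[of _ _ "r \<oplus> s"]) (auto simp: smult_l_distr)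
qed (use x in auto)

lemma set_add_submodule:
  assumes A: "submodule A R M" and B: "submodule B R M"
  shows "submodule (A <+>\<^bsub>M\<^esub> B) R M"
proof -
  note AE = submoduleE[OF A] and BE = submoduleE[OF B]
  show ?thesis
  proof (rule submoduleI)
    show "A <+>\<^bsub>M\<^esub> B \<subseteq> carrier M"
      using AE(1) BE(1) by (auto elim!: set_addE)
    show "\<zero>\<^bsub>M\<^esub> \<in> A <+>\<^bsub>M\<^esub> B"
      using set_addI[where G = M, OF submodule_zero_closed[OF A] submodule_zero_closed[OF B]] by simp
  next
    fix z assume "z \<in> A <+>\<^bsub>M\<^esub> B"
    then obtain a b where ab: "a \<in> A" "b \<in> B" "z = a \<oplus>\<^bsub>M\<^esub> b" by (rule set_addE)
    then have "\<ominus>\<^bsub>M\<^esub> z = \<ominus>\<^bsub>M\<^esub> a \<oplus>\<^bsub>M\<^esub> \<ominus>\<^bsub>M\<^esub> b"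
      using AE(1) BE(1) M.minus_add by auto
    then show "\<ominus>\<^bsub>M\<^esub> z \<in> A <+>\<^bsub>M\<^esub> B" using ab AE(3) BE(3) by (simp add: set_addI)
  next
    fix z w assume "z \<in> A <+>\<^bsub>M\<^esub> B" "w \<in> A <+>\<^bsub>M\<^esub> B"
    then obtain a b a' b' where ab: "a \<in> A" "b \<in> B" "z = a \<oplus>\<^bsub>M\<^esub> b"
      and ab': "a' \<in> A" "b' \<in> B" "w = a' \<oplus>\<^bsub>M\<^esub> b'" by (meson set_addE)
    moreover have "a \<in> carrier M" "b \<in> carrier M" "a' \<in> carrier M" "b' \<in> carrier M"
      using ab ab' AE(1) BE(1) by auto
    ultimately have "z \<oplus>\<^bsub>M\<^esub> w = (a \<oplus>\<^bsub>M\<^esub> a') \<oplus>\<^bsub>M\<^esub> (b \<oplus>\<^bsub>M\<^esub> b')"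
      by (simp add: M.a_ac)
    then show "z \<oplus>\<^bsub>M\<^esub> w \<in> A <+>\<^bsub>M\<^esub> B" using ab ab' AE(5) BE(5) by (simp add: set_addI)
  next
    fix r z assume r: "r \<in> carrier R" and "z \<in> A <+>\<^bsub>M\<^esub> B"
    then obtain a b where ab: "a \<in> A" "b \<in> B" "z = a \<oplus>\<^bsub>M\<^esub> b" by (meson set_addE)
    then have "r \<odot>\<^bsub>M\<^esub> z = r \<odot>\<^bsub>M\<^esub> a \<oplus>\<^bsub>M\<^esub> r \<odot>\<^bsub>M\<^esub> b"
      using AE(1) BE(1) r by (auto intro: smult_r_distr)
    then show "r \<odot>\<^bsub>M\<^esub> z \<in> A <+>\<^bsub>M\<^esub> B" using ab AE(4) BE(4) r by (simp add: set_addI)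
  qed
qed

lemma set_add_subset_submodule:
  assumes "submodule N R M" "A \<subseteq> N" "B \<subseteq> N"
  shows "A <+>\<^bsub>M\<^esub> B \<subseteq> N"
proof
  fix z assume "z \<in> A <+>\<^bsub>M\<^esub> B"
  then obtain a b where "a \<in> A" "b \<in> B" "z = a \<oplus>\<^bsub>M\<^esub> b" by (rule set_addE)
  then show "z \<in> N" using assms submoduleE(5)[OF assms(1)] by blast
qed

lemma smult_Units_inv_cancel:
  assumes "r \<in> Units R" "x \<in> carrier M"
  shows "inv r \<odot>\<^bsub>M\<^esub> (r \<odot>\<^bsub>M\<^esub> x) = x"
  using assms by (simp add: smult_assoc1[symmetric] Units_l_inv Units_closed Units_inv_closed)

lemma smult_eq_smult_iff:
  assumes r: "r \<in> carrier R" and s: "s \<in> carrier R" and x: "x \<in> carrier M"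
  shows "r \<odot>\<^bsub>M\<^esub> x = s \<odot>\<^bsub>M\<^esub> x \<longleftrightarrow> (r \<ominus> s) \<odot>\<^bsub>M\<^esub> x = \<zero>\<^bsub>M\<^esub>"
proof -
  have diff: "(r \<ominus> s) \<odot>\<^bsub>M\<^esub> x = r \<odot>\<^bsub>M\<^esub> x \<oplus>\<^bsub>M\<^esub> \<ominus>\<^bsub>M\<^esub> (s \<odot>\<^bsub>M\<^esub> x)"
    using assms by (simp add: a_minus_def smult_l_distr smult_l_minus)
  show ?thesis
  proof
    assume "r \<odot>\<^bsub>M\<^esub> x = s \<odot>\<^bsub>M\<^esub> x"
    then show "(r \<ominus> s) \<odot>\<^bsub>M\<^esub> x = \<zero>\<^bsub>M\<^esub>" using diff s x by (simp add: M.r_neg)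
  next
    assume "(r \<ominus> s) \<odot>\<^bsub>M\<^esub> x = \<zero>\<^bsub>M\<^esub>"
    then have "\<ominus>\<^bsub>M\<^esub> (\<ominus>\<^bsub>M\<^esub> (s \<odot>\<^bsub>M\<^esub> x)) = r \<odot>\<^bsub>M\<^esub> x"
      using diff assms by (intro M.minus_equality) auto
    then show "r \<odot>\<^bsub>M\<^esub> x = s \<odot>\<^bsub>M\<^esub> x" using s x by simp
  qed
qed

lemma PIdl_smult_mem_smult_image:
  assumes "a \<in> carrier R" "r \<in> PIdl a" "x \<in> carrier M"
  shows "r \<odot>\<^bsub>M\<^esub> x \<in> smult_image M a"
proof -
  obtain s where s: "s \<in> carrier R" "r = s \<otimes> a" using assms(2) unfolding cgenideal_def by blast
  then have "r \<odot>\<^bsub>M\<^esub> x = a \<odot>\<^bsub>M\<^esub> (s \<odot>\<^bsub>M\<^esub> x)"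
    using assms by (simp add: smult_assoc1[symmetric] m_comm)
  then show ?thesis using s assms by auto
qed

lemma mod_colon_ideal:
  assumes N: "submodule N R M"
  shows "ideal (mod_colon R M N) R"
proof (rule idealI)
  note NE = submoduleE[OF N]
  show "ring R" by (rule ring_axioms)
  show "subgroup (mod_colon R M N) (add_monoid R)"
    unfolding subgroup_def using NE submodule_zero_closed[OF N]
    by (auto simp: mod_colon_def a_inv_def[symmetric] smult_l_distr smult_l_minus)
  fix a x assume "a \<in> mod_colon R M N" "x \<in> carrier R"
  then show "x \<otimes> a \<in> mod_colon R M N" "a \<otimes> x \<in> mod_colon R M N"
    unfolding mod_colon_def using NE(4) by (auto simp: smult_assoc1 m_comm)
qed

lemma mod_colon_Int_Units:
  assumes "submodule N R M" "N \<noteq> carrier M"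
  shows "mod_colon R M N \<inter> Units R = {}"
proof -
  have "carrier M \<subseteq> N" if r: "r \<in> mod_colon R M N" "r \<in> Units R" for r
  proof
    fix y assume y: "y \<in> carrier M"
    have "inv r \<odot>\<^bsub>M\<^esub> (r \<odot>\<^bsub>M\<^esub> y) \<in> N"
      using r y submoduleE(4)[OF assms(1)] unfolding mod_colon_def by simp
    then show "y \<in> N" using smult_Units_inv_cancel[OF r(2) y] by simp
  qed
  then show ?thesis using assms submoduleE(1)[OF assms(1)] by blast
qed

lemma ideal_smod_mono: "I \<subseteq> J \<Longrightarrow> ideal_smod R M I \<subseteq> ideal_smod R M J"
  unfolding ideal_smod_def by blast

lemma ideal_smod_least:
  assumes "submodule K R M" "\<And>r x. r \<in> I \<Longrightarrow> x \<in> carrier M \<Longrightarrow> r \<odot>\<^bsub>M\<^esub> x \<in> K"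
  shows "ideal_smod R M I \<subseteq> K"
  using assms unfolding ideal_smod_def by auto

lemma subset_mod_colon_ideal_smod: "I \<subseteq> carrier R \<Longrightarrow> I \<subseteq> mod_colon R M (ideal_smod R M I)"
  unfolding mod_colon_def ideal_smod_def by auto

lemma pap_multiplication_eq_colon_smod:
  assumes "pap_multiplication_module R M" "pseudo_absorbing_primary R M N"
  shows "N = ideal_smod R M (mod_colon R M N)"
proof
  obtain I where I: "ideal I R" "N = ideal_smod R M I"
    using assms unfolding pap_multiplication_module_def by blast
  have "I \<subseteq> carrier R" using ideal.Icarr[OF I(1)] by blast
  then have "I \<subseteq> mod_colon R M N"
    using subset_mod_colon_ideal_smod I(2) by simp
  then show "N \<subseteq> ideal_smod R M (mod_colon R M N)"
    using ideal_smod_mono I(2) by simp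
  show "ideal_smod R M (mod_colon R M N) \<subseteq> N"
    using assms(2) unfolding pseudo_absorbing_primary_def mod_colon_def
    by (intro ideal_smod_least) auto
qed

lemma pap_multiplication_subset:
  assumes "pap_multiplication_module R M" "submodule N R M" "N \<noteq> carrier M"
    and "primeideal (mod_colon R M N) R" "submodule L R M"
    and "\<And>r x. r \<in> mod_colon R M N \<Longrightarrow> x \<in> carrier M \<Longrightarrow> r \<odot>\<^bsub>M\<^esub> x \<in> L"
  shows "N \<subseteq> L"
proof -
  have "pseudo_absorbing_primary R M N"
    unfolding pseudo_absorbing_primary_def
    using assms(2-4) primeideal_two_absorbing_primary by blast
  then have "N = ideal_smod R M (mod_colon R M N)"
    using pap_multiplication_eq_colon_smod assms(1) by blast
  also have "\<dots> \<subseteq> L" using ideal_smod_least assms(5,6) by blast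
  finally show ?thesis .
qed

lemma carrier_eq_cyclic_span:
  assumes x: "x \<in> carrier M" and uv: "u \<in> carrier R" "v \<in> carrier R" "u \<otimes> v = \<zero>"
    and Mu: "carrier M \<subseteq> cyclic_span R M x <+>\<^bsub>M\<^esub> smult_image M u"
    and Mv: "carrier M \<subseteq> cyclic_span R M x <+>\<^bsub>M\<^esub> smult_image M v"
  shows "carrier M = cyclic_span R M x"
proof
  show "carrier M \<subseteq> cyclic_span R M x"
  proof
    fix y assume "y \<in> carrier M"
    then have "y \<in> cyclic_span R M x <+>\<^bsub>M\<^esub> smult_image M u" using Mu by blast
    then obtain r b where rb: "r \<in> carrier R" "b \<in> carrier M" "y = r \<odot>\<^bsub>M\<^esub> x \<oplus>\<^bsub>M\<^esub> u \<odot>\<^bsub>M\<^esub> b"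
      by (rule image_set_add_imageE)
    have "b \<in> cyclic_span R M x <+>\<^bsub>M\<^esub> smult_image M v" using Mv rb(2) by blast
    then obtain s c where sc: "s \<in> carrier R" "c \<in> carrier M" "b = s \<odot>\<^bsub>M\<^esub> x \<oplus>\<^bsub>M\<^esub> v \<odot>\<^bsub>M\<^esub> c"
      by (rule image_set_add_imageE)
    have "u \<odot>\<^bsub>M\<^esub> b = (u \<otimes> s) \<odot>\<^bsub>M\<^esub> x"
      using sc x uv by (simp add: smult_r_distr smult_assoc1[symmetric])
    then have "y = (r \<oplus> u \<otimes> s) \<odot>\<^bsub>M\<^esub> x"
      using rb sc x uv by (simp add: smult_l_distr)
    then show "y \<in> cyclic_span R M x" using rb(1) sc(1) uv by blast
  qed
qed (use x in auto)

lemma mod_iso_cyclicI: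
  fixes N :: "('a, 'n, 'v) module_scheme" and \<phi> :: "'a \<Rightarrow> 'n"
  assumes x: "x \<in> carrier M" and gen: "carrier M = cyclic_span R M x"
    and surj: "\<phi> ` carrier R = carrier N"
    and add: "\<And>r s. r \<in> carrier R \<Longrightarrow> s \<in> carrier R \<Longrightarrow> \<phi> (r \<oplus> s) = \<phi> r \<oplus>\<^bsub>N\<^esub> \<phi> s"
    and smult: "\<And>r s. r \<in> carrier R \<Longrightarrow> s \<in> carrier R \<Longrightarrow> \<phi> (s \<otimes> r) = s \<odot>\<^bsub>N\<^esub> \<phi> r"
    and eq: "\<And>r s. r \<in> carrier R \<Longrightarrow> s \<in> carrier R \<Longrightarrow> \<phi> r = \<phi> s \<longleftrightarrow> r \<odot>\<^bsub>M\<^esub> x = s \<odot>\<^bsub>M\<^esub> x"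
  shows "mod_iso R M N"
proof -
  have cyc: "\<exists>r\<in>carrier R. y = r \<odot>\<^bsub>M\<^esub> x" if "y \<in> carrier M" for y
    using that gen by blast
  define f where "f y = \<phi> (SOME r. r \<in> carrier R \<and> y = r \<odot>\<^bsub>M\<^esub> x)" for y
  have f_smult: "f (r \<odot>\<^bsub>M\<^esub> x) = \<phi> r" if r: "r \<in> carrier R" for r
  proof -
    have "\<exists>s. s \<in> carrier R \<and> r \<odot>\<^bsub>M\<^esub> x = s \<odot>\<^bsub>M\<^esub> x" using r by blast
    then have "(SOME s. s \<in> carrier R \<and> r \<odot>\<^bsub>M\<^esub> x = s \<odot>\<^bsub>M\<^esub> x) \<in> carrier R \<and>
        r \<odot>\<^bsub>M\<^esub> x = (SOME s. s \<in> carrier R \<and> r \<odot>\<^bsub>M\<^esub> x = s \<odot>\<^bsub>M\<^esub> x) \<odot>\<^bsub>M\<^esub> x"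
      by (rule someI_ex)
    then show ?thesis unfolding f_def using eq r by simp
  qed
  have "bij_betw f (carrier M) (carrier N)"
    unfolding bij_betw_def
  proof
    show "inj_on f (carrier M)"
    proof (rule inj_onI)
      fix y y' assume "y \<in> carrier M" "y' \<in> carrier M" and f_eq: "f y = f y'"
      then obtain r r' where r: "r \<in> carrier R" "r' \<in> carrier R" "y = r \<odot>\<^bsub>M\<^esub> x" "y' = r' \<odot>\<^bsub>M\<^esub> x"
        using cyc by meson
      then have "\<phi> r = \<phi> r'" using f_eq f_smult by simp
      then show "y = y'" using eq r by simp
    qed
    have "f ` carrier M = (\<lambda>r. f (r \<odot>\<^bsub>M\<^esub> x)) ` carrier R"
      by (subst gen) (rule image_image)
    also have "\<dots> = \<phi> ` carrier R" using f_smult by (rule image_cong[OF refl])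
    finally show "f ` carrier M = carrier N" using surj by simp
  qed
  moreover have "f (y \<oplus>\<^bsub>M\<^esub> y') = f y \<oplus>\<^bsub>N\<^esub> f y'" if y: "y \<in> carrier M" "y' \<in> carrier M" for y y'
  proof -
    obtain r r' where r: "r \<in> carrier R" "r' \<in> carrier R" "y = r \<odot>\<^bsub>M\<^esub> x" "y' = r' \<odot>\<^bsub>M\<^esub> x"
      using cyc y by meson
    then have "y \<oplus>\<^bsub>M\<^esub> y' = (r \<oplus> r') \<odot>\<^bsub>M\<^esub> x" using x by (simp add: smult_l_distr)
    then show ?thesis using r add f_smult by simp
  qed
  moreover have "f (s \<odot>\<^bsub>M\<^esub> y) = s \<odot>\<^bsub>N\<^esub> f y" if s: "s \<in> carrier R" and y: "y \<in> carrier M" for s y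
  proof -
    obtain r where r: "r \<in> carrier R" "y = r \<odot>\<^bsub>M\<^esub> x" using cyc y by blast
    then have "s \<odot>\<^bsub>M\<^esub> y = (s \<otimes> r) \<odot>\<^bsub>M\<^esub> x" using x s by (simp add: smult_assoc1)
    then show ?thesis using r s smult f_smult by simp
  qed
  ultimately show ?thesis unfolding mod_iso_def by blast
qed

end

section \<open>One branch of the pullback\<close>

text \<open>Abstracts a branch so that both are handled by one argument: for \<open>u = (p1, 0)\<close> and
  \<open>v = (0, p2)\<close> the quotient \<open>R / Rv\<close> is \<open>R1\<close> with \<open>u\<close> acting as its uniformizer, and \<open>u\<close> lies
  in the Jacobson radical of \<open>R\<close>.\<close>
locale pap_branch = module +
  fixes u v
  assumes u_closed: "u \<in> carrier R" and v_closed: "v \<in> carrier R"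
    and PIdl_v_prime: "primeideal (PIdl v) R"
    and divides_pow_mod_v:
      "\<And>r. r \<in> carrier R \<Longrightarrow> r \<notin> PIdl v \<Longrightarrow> \<exists>t\<in>carrier R. \<exists>k::nat. t \<otimes> r \<ominus> u [^] k \<in> PIdl v"
    and one_minus_u_Units: "\<And>r. r \<in> carrier R \<Longrightarrow> \<one> \<ominus> u \<otimes> r \<in> Units R"
    and pap: "pap_multiplication_module R M"
begin

lemma carrier_subset_set_add_pow:
  assumes N: "submodule N R M" and M_eq: "carrier M \<subseteq> N <+>\<^bsub>M\<^esub> smult_image M u"
  shows "carrier M \<subseteq> N <+>\<^bsub>M\<^esub> smult_image M (u [^] (k::nat))"
proof (induction k)
  case 0
  show ?case
  proof
    fix y assume "y \<in> carrier M"
    then have "\<zero>\<^bsub>M\<^esub> \<oplus>\<^bsub>M\<^esub> (u [^] (0::nat)) \<odot>\<^bsub>M\<^esub> y \<in> N <+>\<^bsub>M\<^esub> smult_image M (u [^] (0::nat))"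
      using submodule_zero_closed[OF N] by (intro set_add_imageI)
    then show "y \<in> N <+>\<^bsub>M\<^esub> smult_image M (u [^] (0::nat))" using \<open>y \<in> carrier M\<close> by simp
  qed
next
  case (Suc k)
  note NE = submoduleE[OF N]
  show ?case
  proof
    fix y assume "y \<in> carrier M"
    then have "y \<in> N <+>\<^bsub>M\<^esub> smult_image M (u [^] k)" using Suc.IH by blast
    then obtain n w where nw: "n \<in> N" "w \<in> carrier M" "y = n \<oplus>\<^bsub>M\<^esub> (u [^] k) \<odot>\<^bsub>M\<^esub> w"
      by (rule set_add_imageE)
    have "w \<in> N <+>\<^bsub>M\<^esub> smult_image M u" using M_eq nw(2) by blast
    then obtain n' w' where nw': "n' \<in> N" "w' \<in> carrier M" "w = n' \<oplus>\<^bsub>M\<^esub> u \<odot>\<^bsub>M\<^esub> w'"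
      by (rule set_add_imageE)
    have "n \<in> carrier M" "n' \<in> carrier M" using nw nw' NE(1) by auto
    then have "y = (n \<oplus>\<^bsub>M\<^esub> (u [^] k) \<odot>\<^bsub>M\<^esub> n') \<oplus>\<^bsub>M\<^esub> (u [^] Suc k) \<odot>\<^bsub>M\<^esub> w'"
      using nw nw' u_closed by (simp add: smult_r_distr smult_assoc1 M.a_assoc)
    moreover have "n \<oplus>\<^bsub>M\<^esub> (u [^] k) \<odot>\<^bsub>M\<^esub> n' \<in> N" using NE(4,5) nw nw' u_closed by auto
    ultimately show "y \<in> N <+>\<^bsub>M\<^esub> smult_image M (u [^] Suc k)"
      using nw'(2) by (simp add: set_add_imageI)
  qed
qed

lemma mod_colon_eq_PIdl:
  assumes N: "submodule N R M" "N \<noteq> carrier M" and vM: "smult_image M v \<subseteq> N"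
    and M_eq: "carrier M \<subseteq> N <+>\<^bsub>M\<^esub> smult_image M u"
  shows "mod_colon R M N = PIdl v"
proof
  interpret K: ideal "mod_colon R M N" R using mod_colon_ideal[OF N(1)] .
  show PIdl_v: "PIdl v \<subseteq> mod_colon R M N"
    using PIdl_smult_mem_smult_image[OF v_closed] vM ideal.Icarr[OF cgenideal_ideal[OF v_closed]]
    unfolding mod_colon_def by blast
  show "mod_colon R M N \<subseteq> PIdl v"
  proof
    fix r assume r: "r \<in> mod_colon R M N"
    show "r \<in> PIdl v"
    proof (rule ccontr)
      assume "r \<notin> PIdl v"
      then obtain t k where tk: "t \<in> carrier R" "t \<otimes> r \<ominus> u [^] (k::nat) \<in> PIdl v"
        using divides_pow_mod_v K.Icarr[OF r] by blast
      have "t \<otimes> r \<in> carrier R" "u [^] k \<in> carrier R" using tk(1) K.Icarr[OF r] u_closed by auto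
      then have "u [^] k = t \<otimes> r \<ominus> (t \<otimes> r \<ominus> u [^] k)"
        by (simp add: a_minus_def R.minus_add R.a_assoc[symmetric] R.r_neg)
      also have "\<dots> \<in> mod_colon R M N"
      proof -
        have minus_closed: "a \<ominus> b \<in> mod_colon R M N"
          if "a \<in> mod_colon R M N" "b \<in> mod_colon R M N" for a b
          using that unfolding a_minus_def by simp
        show ?thesis
          using tk PIdl_v K.I_l_closed[OF r] minus_closed[of "t \<otimes> r" "t \<otimes> r \<ominus> u [^] k"] by blast
      qed
      finally have "smult_image M (u [^] k) \<subseteq> N" unfolding mod_colon_def by blast
      then have "carrier M \<subseteq> N"
        using carrier_subset_set_add_pow[OF N(1) M_eq, of k] set_add_subset_submodule[OF N(1)]
        by blast
      then show False using N submoduleE(1)[OF N(1)] by blast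
    qed
  qed
qed

lemma submodule_eq_carrier:
  assumes N: "submodule N R M" and vM: "smult_image M v \<subseteq> N" and "\<not> N \<subseteq> smult_image M v"
    and M_eq: "carrier M \<subseteq> N <+>\<^bsub>M\<^esub> smult_image M u"
  shows "N = carrier M"
proof (rule ccontr)
  assume proper: "N \<noteq> carrier M"
  have "N \<subseteq> smult_image M v"
  proof (rule pap_multiplication_subset[OF pap N proper])
    have "mod_colon R M N = PIdl v" using mod_colon_eq_PIdl N proper vM M_eq by blast
    then show "primeideal (mod_colon R M N) R"
      and "\<And>r x. r \<in> mod_colon R M N \<Longrightarrow> x \<in> carrier M \<Longrightarrow> r \<odot>\<^bsub>M\<^esub> x \<in> smult_image M v"
      using PIdl_v_prime PIdl_smult_mem_smult_image[OF v_closed] by simp_all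
  qed (rule smult_image_submodule[OF v_closed])
  then show False using assms(3) by blast
qed

lemma carrier_eq_zero:
  assumes vM: "smult_image M v = {\<zero>\<^bsub>M\<^esub>}" and uM: "carrier M \<subseteq> smult_image M u"
  shows "carrier M = {\<zero>\<^bsub>M\<^esub>}"
proof (rule ccontr)
  assume "carrier M \<noteq> {\<zero>\<^bsub>M\<^esub>}"
  then obtain x where x: "x \<in> carrier M" "x \<noteq> \<zero>\<^bsub>M\<^esub>" by blast
  have span: "cyclic_span R M x = carrier M"
  proof (rule submodule_eq_carrier[OF cyclic_span_submodule[OF x(1)]])
    show "smult_image M v \<subseteq> cyclic_span R M x"
      using vM submodule_zero_closed[OF cyclic_span_submodule[OF x(1)]] by simp
    have "x \<in> cyclic_span R M x" using x by (intro image_eqI[of _ _ \<one>]) auto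
    then show "\<not> cyclic_span R M x \<subseteq> smult_image M v" using vM x(2) by blast
    show "carrier M \<subseteq> cyclic_span R M x <+>\<^bsub>M\<^esub> smult_image M u"
    proof
      fix y assume "y \<in> carrier M"
      then obtain w where w: "w \<in> carrier M" "y = u \<odot>\<^bsub>M\<^esub> w" using uM by blast
      have "\<zero> \<odot>\<^bsub>M\<^esub> x \<oplus>\<^bsub>M\<^esub> u \<odot>\<^bsub>M\<^esub> w \<in> cyclic_span R M x <+>\<^bsub>M\<^esub> smult_image M u"
        using w(1) by (intro image_set_add_imageI) auto
      then show "y \<in> cyclic_span R M x <+>\<^bsub>M\<^esub> smult_image M u"
        using w x(1) u_closed by simp
    qed
  qed
  obtain y where y: "y \<in> carrier M" "x = u \<odot>\<^bsub>M\<^esub> y" using uM x(1) by blast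
  then obtain r where r: "r \<in> carrier R" "y = r \<odot>\<^bsub>M\<^esub> x" using span by blast
  let ?e = "\<one> \<ominus> u \<otimes> r"
  have ur: "u \<otimes> r \<in> carrier R" using u_closed r(1) by simp
  have "?e \<odot>\<^bsub>M\<^esub> x = x \<oplus>\<^bsub>M\<^esub> \<ominus>\<^bsub>M\<^esub> ((u \<otimes> r) \<odot>\<^bsub>M\<^esub> x)"
    using x(1) ur by (simp add: a_minus_def smult_l_distr smult_l_minus)
  also have "(u \<otimes> r) \<odot>\<^bsub>M\<^esub> x = x"
    using u_closed r x(1) y by (simp add: smult_assoc1)
  finally have "?e \<odot>\<^bsub>M\<^esub> x = \<zero>\<^bsub>M\<^esub>" using x(1) by (simp add: M.r_neg)
  then have "x = inv ?e \<odot>\<^bsub>M\<^esub> \<zero>\<^bsub>M\<^esub>"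
    using smult_Units_inv_cancel[OF one_minus_u_Units[OF r(1)] x(1)] by simp
  then show False using x one_minus_u_Units[OF r(1)] by simp
qed

lemma generator_mod_v:
  assumes x: "x \<in> carrier M" "x \<notin> smult_image M v"
    and M_eq: "carrier M \<subseteq> cyclic_span R M x <+>\<^bsub>M\<^esub> (smult_image M u <+>\<^bsub>M\<^esub> smult_image M v)"
  shows "carrier M \<subseteq> cyclic_span R M x <+>\<^bsub>M\<^esub> smult_image M v"
proof -
  let ?N = "cyclic_span R M x <+>\<^bsub>M\<^esub> smult_image M v"
  have "?N = carrier M"
  proof (rule submodule_eq_carrier)
    show "submodule ?N R M"
      by (rule set_add_submodule[OF cyclic_span_submodule[OF x(1)] smult_image_submodule[OF v_closed]])
    show "smult_image M v \<subseteq> ?N"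
    proof
      fix y assume "y \<in> smult_image M v"
      then obtain b where b: "b \<in> carrier M" "y = v \<odot>\<^bsub>M\<^esub> b" by blast
      have "\<zero> \<odot>\<^bsub>M\<^esub> x \<oplus>\<^bsub>M\<^esub> v \<odot>\<^bsub>M\<^esub> b \<in> ?N"
        using b(1) by (intro image_set_add_imageI) auto
      then show "y \<in> ?N" using b x(1) v_closed by simp
    qed
    have "\<one> \<odot>\<^bsub>M\<^esub> x \<oplus>\<^bsub>M\<^esub> v \<odot>\<^bsub>M\<^esub> \<zero>\<^bsub>M\<^esub> \<in> ?N" by (intro image_set_add_imageI) auto
    then have "x \<in> ?N" using x(1) v_closed by simp
    then show "\<not> ?N \<subseteq> smult_image M v" using x(2) by blast
    show "carrier M \<subseteq> ?N <+>\<^bsub>M\<^esub> smult_image M u"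
    proof
      fix y assume "y \<in> carrier M"
      then have "y \<in> cyclic_span R M x <+>\<^bsub>M\<^esub> (smult_image M u <+>\<^bsub>M\<^esub> smult_image M v)"
        using M_eq by blast
      then obtain r q where rq: "r \<in> carrier R" "q \<in> smult_image M u <+>\<^bsub>M\<^esub> smult_image M v"
        "y = r \<odot>\<^bsub>M\<^esub> x \<oplus>\<^bsub>M\<^esub> q"
        by (rule image_set_addE)
      obtain a b where ab: "a \<in> carrier M" "b \<in> carrier M" "q = u \<odot>\<^bsub>M\<^esub> a \<oplus>\<^bsub>M\<^esub> v \<odot>\<^bsub>M\<^esub> b"
        using rq(2) by (rule image_set_add_imageE)
      have "y = (r \<odot>\<^bsub>M\<^esub> x \<oplus>\<^bsub>M\<^esub> v \<odot>\<^bsub>M\<^esub> b) \<oplus>\<^bsub>M\<^esub> u \<odot>\<^bsub>M\<^esub> a"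
        using rq ab x(1) u_closed v_closed by (simp add: M.a_ac)
      moreover have "r \<odot>\<^bsub>M\<^esub> x \<oplus>\<^bsub>M\<^esub> v \<odot>\<^bsub>M\<^esub> b \<in> ?N"
        using rq(1) ab(2) by (rule image_set_add_imageI)
      ultimately show "y \<in> ?N <+>\<^bsub>M\<^esub> smult_image M u"
        using ab(1) by (simp add: set_add_imageI)
    qed
  qed
  then show ?thesis by simp
qed

end

section \<open>The pullback ring and its separated modules\<close>

locale pap_pullback =
  D1: uniformized_dvr R1 p1 + D2: uniformized_dvr R2 p2 + F: field Rbar +
  H1: ring_hom_cring R1 Rbar V1 + H2: ring_hom_cring R2 Rbar V2 +
  MM: module "pb_ring R1 R2 V1 V2" M
  for R1 :: "'a ring" and p1 and R2 :: "'b ring" and p2 and Rbar :: "'c ring"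
    and V1 and V2 and M :: "('a \<times> 'b, 'm) module" +
  assumes V1_surj: "V1 ` carrier R1 = carrier Rbar"
    and V2_surj: "V2 ` carrier R2 = carrier Rbar"
    and V1_kernel: "a_kernel R1 Rbar V1 = PIdl\<^bsub>R1\<^esub> p1"
    and V2_kernel: "a_kernel R2 Rbar V2 = PIdl\<^bsub>R2\<^esub> p2"
    and indec: "indecomposable (pb_ring R1 R2 V1 V2) M"
    and sep: "separated R1 R2 (PIdl\<^bsub>R1\<^esub> p1) (PIdl\<^bsub>R2\<^esub> p2) (pb_ring R1 R2 V1 V2) M"
    and pap: "pap_multiplication_module (pb_ring R1 R2 V1 V2) M"
begin

abbreviation R where "R \<equiv> pb_ring R1 R2 V1 V2"

lemma pb_carrier_iff [simp]: "(a, b) \<in> carrier R \<longleftrightarrow> a \<in> carrier R1 \<and> b \<in> carrier R2 \<and> V1 a = V2 b"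
  by (simp add: pb_ring_def)

lemma pb_mult [simp]: "x \<otimes>\<^bsub>R\<^esub> y = (fst x \<otimes>\<^bsub>R1\<^esub> fst y, snd x \<otimes>\<^bsub>R2\<^esub> snd y)"
  by (simp add: pb_ring_def)

lemma pb_add [simp]: "x \<oplus>\<^bsub>R\<^esub> y = (fst x \<oplus>\<^bsub>R1\<^esub> fst y, snd x \<oplus>\<^bsub>R2\<^esub> snd y)"
  by (simp add: pb_ring_def)

lemma pb_one [simp]: "\<one>\<^bsub>R\<^esub> = (\<one>\<^bsub>R1\<^esub>, \<one>\<^bsub>R2\<^esub>)"
  by (simp add: pb_ring_def)

lemma pb_zero [simp]: "\<zero>\<^bsub>R\<^esub> = (\<zero>\<^bsub>R1\<^esub>, \<zero>\<^bsub>R2\<^esub>)"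
  by (simp add: pb_ring_def)

lemma pb_fst_closed: "r \<in> carrier R \<Longrightarrow> fst r \<in> carrier R1"
  by (cases r) simp

lemma pb_snd_closed: "r \<in> carrier R \<Longrightarrow> snd r \<in> carrier R2"
  by (cases r) simp

lemma fst_ring_hom: "ring_hom_ring R R1 fst"
  by (intro ring_hom_ringI2 MM.R.ring_axioms D1.ring_axioms ring_hom_memI) (auto simp: pb_ring_def)

lemma snd_ring_hom: "ring_hom_ring R R2 snd"
  by (intro ring_hom_ringI2 MM.R.ring_axioms D2.ring_axioms ring_hom_memI) (auto simp: pb_ring_def)

lemma pb_a_inv [simp]: "r \<in> carrier R \<Longrightarrow> \<ominus>\<^bsub>R\<^esub> r = (\<ominus>\<^bsub>R1\<^esub> fst r, \<ominus>\<^bsub>R2\<^esub> snd r)"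
proof -
  assume r: "r \<in> carrier R"
  interpret fst: ring_hom_ring R R1 fst by (rule fst_ring_hom)
  interpret snd: ring_hom_ring R R2 snd by (rule snd_ring_hom)
  show ?thesis using fst.hom_a_inv[OF r] snd.hom_a_inv[OF r] by (simp add: prod_eq_iff)
qed

lemma pb_minus [simp]:
  "r \<in> carrier R \<Longrightarrow> s \<in> carrier R \<Longrightarrow> r \<ominus>\<^bsub>R\<^esub> s = (fst r \<ominus>\<^bsub>R1\<^esub> fst s, snd r \<ominus>\<^bsub>R2\<^esub> snd s)"
  by (simp add: a_minus_def)

lemma PIdl1_iff: "a \<in> PIdl\<^bsub>R1\<^esub> p1 \<longleftrightarrow> a \<in> carrier R1 \<and> V1 a = \<zero>\<^bsub>Rbar\<^esub>"
  using V1_kernel a_kernel_def'[of R1 Rbar V1] by auto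

lemma PIdl2_iff: "b \<in> PIdl\<^bsub>R2\<^esub> p2 \<longleftrightarrow> b \<in> carrier R2 \<and> V2 b = \<zero>\<^bsub>Rbar\<^esub>"
  using V2_kernel a_kernel_def'[of R2 Rbar V2] by auto

lemma ex_snd: "a \<in> carrier R1 \<Longrightarrow> \<exists>b. (a, b) \<in> carrier R"
  using V2_surj H1.hom_closed by (metis imageE pb_carrier_iff)

lemma ex_fst: "b \<in> carrier R2 \<Longrightarrow> \<exists>a. (a, b) \<in> carrier R"
  using V1_surj H2.hom_closed by (metis imageE pb_carrier_iff)

definition u1 where "u1 = (p1, \<zero>\<^bsub>R2\<^esub>)"
definition u2 where "u2 = (\<zero>\<^bsub>R1\<^esub>, p2)"

lemma V1_p1: "V1 p1 = \<zero>\<^bsub>Rbar\<^esub>"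
  using PIdl1_iff D1.cgenideal_self[OF D1.p_closed] by blast

lemma V2_p2: "V2 p2 = \<zero>\<^bsub>Rbar\<^esub>"
  using PIdl2_iff D2.cgenideal_self[OF D2.p_closed] by blast

lemma u1_closed: "u1 \<in> carrier R"
  unfolding u1_def using D1.p_closed V1_p1 by simp

lemma u2_closed: "u2 \<in> carrier R"
  unfolding u2_def using D2.p_closed V2_p2 by simp

lemma u1_mult_u2: "u1 \<otimes>\<^bsub>R\<^esub> u2 = \<zero>\<^bsub>R\<^esub>"
  unfolding u1_def u2_def using D1.p_closed D2.p_closed by simp

(* Stated as preimages of ideals under the projections, the form primeideal_vimage expects. *)
lemma PIdl_u2_eq: "PIdl\<^bsub>R\<^esub> u2 = {r \<in> carrier R. fst r \<in> {\<zero>\<^bsub>R1\<^esub>}}"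
proof
  show "PIdl\<^bsub>R\<^esub> u2 \<subseteq> {r \<in> carrier R. fst r \<in> {\<zero>\<^bsub>R1\<^esub>}}"
  proof
    fix r assume "r \<in> PIdl\<^bsub>R\<^esub> u2"
    then obtain s where s: "s \<in> carrier R" "r = s \<otimes>\<^bsub>R\<^esub> u2" unfolding cgenideal_def by blast
    then have "r \<in> carrier R" using u2_closed by (simp del: pb_mult add: MM.m_closed)
    moreover have "fst r = \<zero>\<^bsub>R1\<^esub>" using s pb_fst_closed by (simp add: u2_def)
    ultimately show "r \<in> {r \<in> carrier R. fst r \<in> {\<zero>\<^bsub>R1\<^esub>}}" by simp
  qed
  show "{r \<in> carrier R. fst r \<in> {\<zero>\<^bsub>R1\<^esub>}} \<subseteq> PIdl\<^bsub>R\<^esub> u2"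
  proof
    fix r assume "r \<in> {r \<in> carrier R. fst r \<in> {\<zero>\<^bsub>R1\<^esub>}}"
    then obtain b where r: "r = (\<zero>\<^bsub>R1\<^esub>, b)" "b \<in> PIdl\<^bsub>R2\<^esub> p2"
      using PIdl2_iff by (cases r) auto
    then obtain c where c: "c \<in> carrier R2" "b = c \<otimes>\<^bsub>R2\<^esub> p2" unfolding cgenideal_def by blast
    obtain c1 where "(c1, c) \<in> carrier R" using ex_fst c(1) by blast
    moreover have "r = (c1, c) \<otimes>\<^bsub>R\<^esub> u2" using calculation r c D2.p_closed by (simp add: u2_def)
    ultimately show "r \<in> PIdl\<^bsub>R\<^esub> u2" unfolding cgenideal_def by blast
  qed
qed

lemma PIdl_u1_eq: "PIdl\<^bsub>R\<^esub> u1 = {r \<in> carrier R. snd r \<in> {\<zero>\<^bsub>R2\<^esub>}}"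
proof
  show "PIdl\<^bsub>R\<^esub> u1 \<subseteq> {r \<in> carrier R. snd r \<in> {\<zero>\<^bsub>R2\<^esub>}}"
  proof
    fix r assume "r \<in> PIdl\<^bsub>R\<^esub> u1"
    then obtain s where s: "s \<in> carrier R" "r = s \<otimes>\<^bsub>R\<^esub> u1" unfolding cgenideal_def by blast
    then have "r \<in> carrier R" using u1_closed by (simp del: pb_mult add: MM.m_closed)
    moreover have "snd r = \<zero>\<^bsub>R2\<^esub>" using s pb_snd_closed by (simp add: u1_def)
    ultimately show "r \<in> {r \<in> carrier R. snd r \<in> {\<zero>\<^bsub>R2\<^esub>}}" by simp
  qed
  show "{r \<in> carrier R. snd r \<in> {\<zero>\<^bsub>R2\<^esub>}} \<subseteq> PIdl\<^bsub>R\<^esub> u1"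
  proof
    fix r assume "r \<in> {r \<in> carrier R. snd r \<in> {\<zero>\<^bsub>R2\<^esub>}}"
    then obtain a where r: "r = (a, \<zero>\<^bsub>R2\<^esub>)" "a \<in> PIdl\<^bsub>R1\<^esub> p1"
      using PIdl1_iff by (cases r) auto
    then obtain c where c: "c \<in> carrier R1" "a = c \<otimes>\<^bsub>R1\<^esub> p1" unfolding cgenideal_def by blast
    obtain c2 where "(c, c2) \<in> carrier R" using ex_snd c(1) by blast
    moreover have "r = (c, c2) \<otimes>\<^bsub>R\<^esub> u1" using calculation r c D1.p_closed by (simp add: u1_def)
    ultimately show "r \<in> PIdl\<^bsub>R\<^esub> u1" unfolding cgenideal_def by blast
  qed
qed

lemma pb_UnitsI:
  assumes r: "r \<in> carrier R" and residue: "V1 (fst r) \<noteq> \<zero>\<^bsub>Rbar\<^esub>"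
  shows "r \<in> Units R"
proof -
  obtain a b where ab: "r = (a, b)" by (cases r)
  with r have c: "a \<in> carrier R1" "b \<in> carrier R2" "V1 a = V2 b" by auto
  have a: "a \<in> Units R1" using D1.Units_iff_notin_PIdl c residue ab PIdl1_iff by auto
  have b: "b \<in> Units R2" using D2.Units_iff_notin_PIdl c residue ab PIdl2_iff by auto
  have "V1 a \<otimes>\<^bsub>Rbar\<^esub> V1 (inv\<^bsub>R1\<^esub> a) = \<one>\<^bsub>Rbar\<^esub>"
    using H1.hom_mult[of a "inv\<^bsub>R1\<^esub> a"] a c(1) by simp
  then have "V1 (inv\<^bsub>R1\<^esub> a) = inv\<^bsub>Rbar\<^esub> (V1 a)"
    using F.comm_inv_char[of "V1 a" "V1 (inv\<^bsub>R1\<^esub> a)"] a c(1) by simp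
  also have "\<dots> = V2 (inv\<^bsub>R2\<^esub> b)"
    using F.comm_inv_char[of "V2 b" "V2 (inv\<^bsub>R2\<^esub> b)"] H2.hom_mult[of b "inv\<^bsub>R2\<^esub> b"] b c(2,3)
    by simp
  finally have "(inv\<^bsub>R1\<^esub> a, inv\<^bsub>R2\<^esub> b) \<in> carrier R" using a b by simp
  then show ?thesis
    unfolding Units_def using r ab a b by (auto intro!: bexI[of _ "(inv\<^bsub>R1\<^esub> a, inv\<^bsub>R2\<^esub> b)"])
qed

lemma one_minus_mult_Units:
  assumes r: "r \<in> carrier R" and s: "s \<in> carrier R" "V1 (fst s) = \<zero>\<^bsub>Rbar\<^esub>"
  shows "\<one>\<^bsub>R\<^esub> \<ominus>\<^bsub>R\<^esub> s \<otimes>\<^bsub>R\<^esub> r \<in> Units R"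
proof (rule pb_UnitsI)
  show "\<one>\<^bsub>R\<^esub> \<ominus>\<^bsub>R\<^esub> s \<otimes>\<^bsub>R\<^esub> r \<in> carrier R"
    using r s by (simp del: pb_mult pb_one pb_minus add: MM.m_closed MM.minus_closed)
  have "s \<otimes>\<^bsub>R\<^esub> r \<in> carrier R" using r s by (simp del: pb_mult add: MM.m_closed)
  then have "fst (\<one>\<^bsub>R\<^esub> \<ominus>\<^bsub>R\<^esub> s \<otimes>\<^bsub>R\<^esub> r) = \<one>\<^bsub>R1\<^esub> \<ominus>\<^bsub>R1\<^esub> fst s \<otimes>\<^bsub>R1\<^esub> fst r"
    using pb_minus[OF MM.one_closed] by simp
  then have "V1 (fst (\<one>\<^bsub>R\<^esub> \<ominus>\<^bsub>R\<^esub> s \<otimes>\<^bsub>R\<^esub> r)) = \<one>\<^bsub>Rbar\<^esub>"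
    using r s pb_fst_closed by (simp add: a_minus_def)
  then show "V1 (fst (\<one>\<^bsub>R\<^esub> \<ominus>\<^bsub>R\<^esub> s \<otimes>\<^bsub>R\<^esub> r)) \<noteq> \<zero>\<^bsub>Rbar\<^esub>" by simp
qed

lemma pap_branch_u1: "pap_branch R M u1 u2"
proof (intro pap_branch.intro MM.module_axioms pap_branch_axioms.intro)
  interpret fst: ring_hom_ring R R1 fst by (rule fst_ring_hom)
  show "u1 \<in> carrier R" "u2 \<in> carrier R" using u1_closed u2_closed .
  show "primeideal (PIdl\<^bsub>R\<^esub> u2) R"
    unfolding PIdl_u2_eq by (rule fst.primeideal_vimage[OF MM.is_cring D1.zeroprimeideal])
  show "\<exists>t\<in>carrier R. \<exists>k::nat. t \<otimes>\<^bsub>R\<^esub> r \<ominus>\<^bsub>R\<^esub> u1 [^]\<^bsub>R\<^esub> k \<in> PIdl\<^bsub>R\<^esub> u2"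
    if r: "r \<in> carrier R" "r \<notin> PIdl\<^bsub>R\<^esub> u2" for r
  proof -
    have "fst r \<in> carrier R1" "fst r \<noteq> \<zero>\<^bsub>R1\<^esub>" using r pb_fst_closed unfolding PIdl_u2_eq by auto
    then obtain w k where wk: "w \<in> Units R1" "fst r = w \<otimes>\<^bsub>R1\<^esub> p1 [^]\<^bsub>R1\<^esub> (k::nat)"
      using D1.unit_mult_pow by blast
    obtain t2 where t: "(inv\<^bsub>R1\<^esub> w, t2) \<in> carrier R" using ex_snd wk(1) by blast
    have tr: "(inv\<^bsub>R1\<^esub> w, t2) \<otimes>\<^bsub>R\<^esub> r \<in> carrier R" using t r(1) by (simp del: pb_mult add: MM.m_closed)
    have "fst ((inv\<^bsub>R1\<^esub> w, t2) \<otimes>\<^bsub>R\<^esub> r) = p1 [^]\<^bsub>R1\<^esub> k"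
      using wk D1.p_closed by (simp add: D1.m_assoc[symmetric] D1.Units_closed)
    moreover have "fst (u1 [^]\<^bsub>R\<^esub> k) = p1 [^]\<^bsub>R1\<^esub> k" using fst.hom_nat_pow u1_closed by (simp add: u1_def)
    ultimately have "fst ((inv\<^bsub>R1\<^esub> w, t2) \<otimes>\<^bsub>R\<^esub> r \<ominus>\<^bsub>R\<^esub> u1 [^]\<^bsub>R\<^esub> k) = \<zero>\<^bsub>R1\<^esub>"
      using tr u1_closed D1.p_closed by (simp del: pb_mult add: D1.r_neg a_minus_def[of R1])
    moreover have "(inv\<^bsub>R1\<^esub> w, t2) \<otimes>\<^bsub>R\<^esub> r \<ominus>\<^bsub>R\<^esub> u1 [^]\<^bsub>R\<^esub> k \<in> carrier R"
      using tr u1_closed by (simp del: pb_mult pb_minus add: MM.minus_closed)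
    ultimately show ?thesis using t unfolding PIdl_u2_eq by blast
  qed
  show "\<one>\<^bsub>R\<^esub> \<ominus>\<^bsub>R\<^esub> u1 \<otimes>\<^bsub>R\<^esub> r \<in> Units R" if "r \<in> carrier R" for r
    by (rule one_minus_mult_Units[OF that u1_closed]) (simp add: u1_def V1_p1)
qed (rule pap)

lemma pap_branch_u2: "pap_branch R M u2 u1"
proof (intro pap_branch.intro MM.module_axioms pap_branch_axioms.intro)
  interpret snd: ring_hom_ring R R2 snd by (rule snd_ring_hom)
  show "u2 \<in> carrier R" "u1 \<in> carrier R" using u2_closed u1_closed .
  show "primeideal (PIdl\<^bsub>R\<^esub> u1) R"
    unfolding PIdl_u1_eq by (rule snd.primeideal_vimage[OF MM.is_cring D2.zeroprimeideal])
  show "\<exists>t\<in>carrier R. \<exists>k::nat. t \<otimes>\<^bsub>R\<^esub> r \<ominus>\<^bsub>R\<^esub> u2 [^]\<^bsub>R\<^esub> k \<in> PIdl\<^bsub>R\<^esub> u1"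
    if r: "r \<in> carrier R" "r \<notin> PIdl\<^bsub>R\<^esub> u1" for r
  proof -
    have "snd r \<in> carrier R2" "snd r \<noteq> \<zero>\<^bsub>R2\<^esub>" using r pb_snd_closed unfolding PIdl_u1_eq by auto
    then obtain w k where wk: "w \<in> Units R2" "snd r = w \<otimes>\<^bsub>R2\<^esub> p2 [^]\<^bsub>R2\<^esub> (k::nat)"
      using D2.unit_mult_pow by blast
    obtain t1 where t: "(t1, inv\<^bsub>R2\<^esub> w) \<in> carrier R" using ex_fst wk(1) by blast
    have tr: "(t1, inv\<^bsub>R2\<^esub> w) \<otimes>\<^bsub>R\<^esub> r \<in> carrier R" using t r(1) by (simp del: pb_mult add: MM.m_closed)
    have "snd ((t1, inv\<^bsub>R2\<^esub> w) \<otimes>\<^bsub>R\<^esub> r) = p2 [^]\<^bsub>R2\<^esub> k"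
      using wk D2.p_closed by (simp add: D2.m_assoc[symmetric] D2.Units_closed)
    moreover have "snd (u2 [^]\<^bsub>R\<^esub> k) = p2 [^]\<^bsub>R2\<^esub> k" using snd.hom_nat_pow u2_closed by (simp add: u2_def)
    ultimately have "snd ((t1, inv\<^bsub>R2\<^esub> w) \<otimes>\<^bsub>R\<^esub> r \<ominus>\<^bsub>R\<^esub> u2 [^]\<^bsub>R\<^esub> k) = \<zero>\<^bsub>R2\<^esub>"
      using tr u2_closed D2.p_closed by (simp del: pb_mult add: D2.r_neg a_minus_def[of R2])
    moreover have "(t1, inv\<^bsub>R2\<^esub> w) \<otimes>\<^bsub>R\<^esub> r \<ominus>\<^bsub>R\<^esub> u2 [^]\<^bsub>R\<^esub> k \<in> carrier R"
      using tr u2_closed by (simp del: pb_mult pb_minus add: MM.minus_closed)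
    ultimately show ?thesis using t unfolding PIdl_u1_eq by blast
  qed
  show "\<one>\<^bsub>R\<^esub> \<ominus>\<^bsub>R\<^esub> u2 \<otimes>\<^bsub>R\<^esub> r \<in> Units R" if "r \<in> carrier R" for r
    by (rule one_minus_mult_Units[OF that u2_closed]) (simp add: u2_def)
qed (rule pap)

abbreviation Q where "Q \<equiv> smult_image M u1 <+>\<^bsub>M\<^esub> smult_image M u2"

lemma Q_submodule: "submodule Q R M"
  using MM.set_add_submodule MM.smult_image_submodule u1_closed u2_closed by blast

lemma zero_in_smult_image: "a \<in> carrier R \<Longrightarrow> \<zero>\<^bsub>M\<^esub> \<in> smult_image M a"
  by (intro image_eqI[of _ _ "\<zero>\<^bsub>M\<^esub>"]) auto

lemma smult_images_subset_Q: "smult_image M u1 \<subseteq> Q" "smult_image M u2 \<subseteq> Q"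
proof -
  have "y \<in> Q" if "y \<in> smult_image M u1" for y
    using set_addI[where G = M, OF that zero_in_smult_image[OF u2_closed]] that u1_closed by auto
  moreover have "y \<in> Q" if "y \<in> smult_image M u2" for y
    using set_addI[where G = M, OF zero_in_smult_image[OF u1_closed] that] that u2_closed by auto
  ultimately show "smult_image M u1 \<subseteq> Q" "smult_image M u2 \<subseteq> Q" by blast+
qed

lemma smult_image_u1_Int_u2: "smult_image M u1 \<inter> smult_image M u2 = {\<zero>\<^bsub>M\<^esub>}"
proof -
  have "u1 \<in> {(a, \<zero>\<^bsub>R2\<^esub>) | a. a \<in> PIdl\<^bsub>R1\<^esub> p1}"
    unfolding u1_def using D1.cgenideal_self[OF D1.p_closed] by blast
  then have "smult_image M u1 \<subseteq> ideal_smod R M {(a, \<zero>\<^bsub>R2\<^esub>) | a. a \<in> PIdl\<^bsub>R1\<^esub> p1}"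
    unfolding ideal_smod_def by blast
  moreover have "u2 \<in> {(\<zero>\<^bsub>R1\<^esub>, b) | b. b \<in> PIdl\<^bsub>R2\<^esub> p2}"
    unfolding u2_def using D2.cgenideal_self[OF D2.p_closed] by blast
  then have "smult_image M u2 \<subseteq> ideal_smod R M {(\<zero>\<^bsub>R1\<^esub>, b) | b. b \<in> PIdl\<^bsub>R2\<^esub> p2}"
    unfolding ideal_smod_def by blast
  ultimately show ?thesis
    using sep zero_in_smult_image u1_closed u2_closed unfolding separated_def by blast
qed

lemma Q_neq_carrier: "Q \<noteq> carrier M"
proof
  assume Q: "Q = carrier M"
  then have "smult_image M u1 = {\<zero>\<^bsub>M\<^esub>} \<or> smult_image M u2 = {\<zero>\<^bsub>M\<^esub>}"
    using indec smult_image_u1_Int_u2 MM.smult_image_submodule u1_closed u2_closed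
    unfolding indecomposable_def by blast
  moreover have "carrier M \<subseteq> smult_image M u2" if "smult_image M u1 = {\<zero>\<^bsub>M\<^esub>}"
  proof
    fix y assume "y \<in> carrier M"
    then have "y \<in> Q" using Q by simp
    then obtain a b where "a \<in> smult_image M u1" "b \<in> smult_image M u2" "y = a \<oplus>\<^bsub>M\<^esub> b"
      by (rule set_addE)
    then show "y \<in> smult_image M u2" using that u2_closed by auto
  qed
  moreover have "carrier M \<subseteq> smult_image M u1" if "smult_image M u2 = {\<zero>\<^bsub>M\<^esub>}"
  proof
    fix y assume "y \<in> carrier M"
    then have "y \<in> Q" using Q by simp
    then obtain a b where "a \<in> smult_image M u1" "b \<in> smult_image M u2" "y = a \<oplus>\<^bsub>M\<^esub> b"
      by (rule set_addE)
    then show "y \<in> smult_image M u1" using that u1_closed by auto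
  qed
  ultimately have "carrier M = {\<zero>\<^bsub>M\<^esub>}"
    using pap_branch.carrier_eq_zero[OF pap_branch_u1] pap_branch.carrier_eq_zero[OF pap_branch_u2]
    by blast
  then show False using indec unfolding indecomposable_def by blast
qed

lemma PIdl1_split:
  assumes "(a, b) \<in> carrier R" "a \<in> PIdl\<^bsub>R1\<^esub> p1"
  shows "(a, \<zero>\<^bsub>R2\<^esub>) \<in> PIdl\<^bsub>R\<^esub> u1" "(\<zero>\<^bsub>R1\<^esub>, b) \<in> PIdl\<^bsub>R\<^esub> u2"
  using assms PIdl1_iff PIdl2_iff unfolding PIdl_u1_eq PIdl_u2_eq by auto

lemma PIdl1_smult_mem_Q:
  assumes r: "r \<in> carrier R" "fst r \<in> PIdl\<^bsub>R1\<^esub> p1" and y: "y \<in> carrier M"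
  shows "r \<odot>\<^bsub>M\<^esub> y \<in> Q"
proof -
  obtain a b where ab: "r = (a, b)" by (cases r)
  with r have split: "(a, \<zero>\<^bsub>R2\<^esub>) \<in> PIdl\<^bsub>R\<^esub> u1" "(\<zero>\<^bsub>R1\<^esub>, b) \<in> PIdl\<^bsub>R\<^esub> u2"
    using PIdl1_split by auto
  then have c: "(a, \<zero>\<^bsub>R2\<^esub>) \<in> carrier R" "(\<zero>\<^bsub>R1\<^esub>, b) \<in> carrier R"
    unfolding PIdl_u1_eq PIdl_u2_eq by auto
  have "r \<odot>\<^bsub>M\<^esub> y = (a, \<zero>\<^bsub>R2\<^esub>) \<odot>\<^bsub>M\<^esub> y \<oplus>\<^bsub>M\<^esub> (\<zero>\<^bsub>R1\<^esub>, b) \<odot>\<^bsub>M\<^esub> y"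
    using MM.smult_l_distr[OF c y] r ab by simp
  then show ?thesis
    using MM.PIdl_smult_mem_smult_image[OF u1_closed split(1) y]
      MM.PIdl_smult_mem_smult_image[OF u2_closed split(2) y]
    by (simp add: set_addI)
qed

lemma carrier_subset_cyclic_span_Q:
  assumes x: "x \<in> carrier M" "x \<notin> Q"
  shows "carrier M \<subseteq> cyclic_span R M x <+>\<^bsub>M\<^esub> Q"
proof -
  let ?N = "cyclic_span R M x <+>\<^bsub>M\<^esub> Q"
  let ?P = "{r \<in> carrier R. fst r \<in> PIdl\<^bsub>R1\<^esub> p1}"
  have N: "submodule ?N R M"
    by (rule MM.set_add_submodule[OF MM.cyclic_span_submodule[OF x(1)] Q_submodule])
  have Q_N: "Q \<subseteq> ?N"
  proof
    fix q assume q: "q \<in> Q"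
    then have "\<zero>\<^bsub>R\<^esub> \<odot>\<^bsub>M\<^esub> x \<oplus>\<^bsub>M\<^esub> q \<in> ?N" by (intro image_set_addI) (simp_all del: pb_zero)
    then show "q \<in> ?N" using q x(1) MM.submoduleE(1)[OF Q_submodule] by (auto simp del: pb_zero)
  qed
  have "\<one>\<^bsub>R\<^esub> \<odot>\<^bsub>M\<^esub> x \<oplus>\<^bsub>M\<^esub> \<zero>\<^bsub>M\<^esub> \<in> ?N"
    using MM.submodule_zero_closed[OF Q_submodule] by (intro image_set_addI) (simp_all del: pb_one)
  then have x_N: "x \<in> ?N" using x(1) by (simp del: pb_one)
  have "?N = carrier M"
  proof (rule ccontr)
    assume proper: "?N \<noteq> carrier M"
    interpret fst: ring_hom_ring R R1 fst by (rule fst_ring_hom)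
    have "mod_colon R M ?N = ?P"
    proof
      show "?P \<subseteq> mod_colon R M ?N" using PIdl1_smult_mem_Q Q_N unfolding mod_colon_def by blast
      show "mod_colon R M ?N \<subseteq> ?P"
      proof
        fix r assume r: "r \<in> mod_colon R M ?N"
        then have "r \<notin> Units R" using MM.mod_colon_Int_Units[OF N proper] by blast
        then show "r \<in> ?P" using r pb_UnitsI pb_fst_closed PIdl1_iff unfolding mod_colon_def by blast
      qed
    qed
    then have "?N \<subseteq> Q"
      using MM.pap_multiplication_subset[OF pap N proper _ Q_submodule] PIdl1_smult_mem_Q
        fst.primeideal_vimage[OF MM.is_cring D1.maximalideal_prime[OF D1.PIdl_maximal]]
      by auto
    then show False using x(2) x_N by blast
  qed
  then show ?thesis by simp
qed

lemma cyclic_generator: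
  obtains x where "x \<in> carrier M" "x \<notin> Q" "carrier M = cyclic_span R M x"
proof -
  obtain x where x: "x \<in> carrier M" "x \<notin> Q"
    using Q_neq_carrier MM.submoduleE(1)[OF Q_submodule] by blast
  have gen: "carrier M \<subseteq> cyclic_span R M x <+>\<^bsub>M\<^esub> Q"
    by (rule carrier_subset_cyclic_span_Q[OF x])
  have "Q = smult_image M u2 <+>\<^bsub>M\<^esub> smult_image M u1"
    by (rule MM.M.set_add_commute) (use u1_closed u2_closed in auto)
  then have "carrier M \<subseteq> cyclic_span R M x <+>\<^bsub>M\<^esub> smult_image M u1"
    using pap_branch.generator_mod_v[OF pap_branch_u2 x(1)] x(2) gen smult_images_subset_Q by auto
  moreover have "carrier M \<subseteq> cyclic_span R M x <+>\<^bsub>M\<^esub> smult_image M u2"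
    using pap_branch.generator_mod_v[OF pap_branch_u1 x(1)] x(2) gen smult_images_subset_Q by auto
  ultimately have "carrier M = cyclic_span R M x"
    by (rule MM.carrier_eq_cyclic_span[OF x(1) u1_closed u2_closed u1_mult_u2])
  then show ?thesis using that x by blast
qed

definition ann1 :: "'m \<Rightarrow> 'a set"
  where "ann1 x = {a. (a, \<zero>\<^bsub>R2\<^esub>) \<in> carrier R \<and> (a, \<zero>\<^bsub>R2\<^esub>) \<odot>\<^bsub>M\<^esub> x = \<zero>\<^bsub>M\<^esub>}"

definition ann2 :: "'m \<Rightarrow> 'b set"
  where "ann2 x = {b. (\<zero>\<^bsub>R1\<^esub>, b) \<in> carrier R \<and> (\<zero>\<^bsub>R1\<^esub>, b) \<odot>\<^bsub>M\<^esub> x = \<zero>\<^bsub>M\<^esub>}"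

lemma ann1_cases:
  assumes x: "x \<in> carrier M"
  shows "ann1 x = {\<zero>\<^bsub>R1\<^esub>} \<or> (\<exists>n::nat. n \<ge> 1 \<and> ann1 x = PIdl\<^bsub>R1\<^esub> (p1 [^]\<^bsub>R1\<^esub> n))"
proof (rule D1.PIdl_pow_cases)
  show "ann1 x \<subseteq> PIdl\<^bsub>R1\<^esub> p1" unfolding ann1_def using PIdl1_iff by auto
  show "\<zero>\<^bsub>R1\<^esub> \<in> ann1 x" unfolding ann1_def using MM.smult_l_null[OF x] by simp
  fix c a assume c: "c \<in> carrier R1" and a: "a \<in> ann1 x"
  obtain c2 where cc: "(c, c2) \<in> carrier R" using ex_snd c by blast
  have a0: "(a, \<zero>\<^bsub>R2\<^esub>) \<in> carrier R" "(a, \<zero>\<^bsub>R2\<^esub>) \<odot>\<^bsub>M\<^esub> x = \<zero>\<^bsub>M\<^esub>" using a unfolding ann1_def by auto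
  have "(c, c2) \<otimes>\<^bsub>R\<^esub> (a, \<zero>\<^bsub>R2\<^esub>) \<in> carrier R" using cc a0(1) by (simp del: pb_mult add: MM.m_closed)
  moreover have "((c, c2) \<otimes>\<^bsub>R\<^esub> (a, \<zero>\<^bsub>R2\<^esub>)) \<odot>\<^bsub>M\<^esub> x = \<zero>\<^bsub>M\<^esub>"
    using cc a0 x by (simp del: pb_mult add: MM.smult_assoc1)
  ultimately show "c \<otimes>\<^bsub>R1\<^esub> a \<in> ann1 x" unfolding ann1_def using cc by simp
qed

lemma ann2_cases:
  assumes x: "x \<in> carrier M"
  shows "ann2 x = {\<zero>\<^bsub>R2\<^esub>} \<or> (\<exists>n::nat. n \<ge> 1 \<and> ann2 x = PIdl\<^bsub>R2\<^esub> (p2 [^]\<^bsub>R2\<^esub> n))"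
proof (rule D2.PIdl_pow_cases)
  show "ann2 x \<subseteq> PIdl\<^bsub>R2\<^esub> p2"
  proof
    fix b assume "b \<in> ann2 x"
    then have "(\<zero>\<^bsub>R1\<^esub>, b) \<in> carrier R" unfolding ann2_def by blast
    then show "b \<in> PIdl\<^bsub>R2\<^esub> p2" unfolding PIdl2_iff using H1.hom_zero by (metis pb_carrier_iff)
  qed
  show "\<zero>\<^bsub>R2\<^esub> \<in> ann2 x" unfolding ann2_def using MM.smult_l_null[OF x] by simp
  fix c b assume c: "c \<in> carrier R2" and b: "b \<in> ann2 x"
  obtain c1 where cc: "(c1, c) \<in> carrier R" using ex_fst c by blast
  have b0: "(\<zero>\<^bsub>R1\<^esub>, b) \<in> carrier R" "(\<zero>\<^bsub>R1\<^esub>, b) \<odot>\<^bsub>M\<^esub> x = \<zero>\<^bsub>M\<^esub>" using b unfolding ann2_def by auto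
  have "(c1, c) \<otimes>\<^bsub>R\<^esub> (\<zero>\<^bsub>R1\<^esub>, b) \<in> carrier R" using cc b0(1) by (simp del: pb_mult add: MM.m_closed)
  moreover have "((c1, c) \<otimes>\<^bsub>R\<^esub> (\<zero>\<^bsub>R1\<^esub>, b)) \<odot>\<^bsub>M\<^esub> x = \<zero>\<^bsub>M\<^esub>"
    using cc b0 x by (simp del: pb_mult add: MM.smult_assoc1)
  ultimately show "c \<otimes>\<^bsub>R2\<^esub> b \<in> ann2 x" unfolding ann2_def using cc by simp
qed

lemma ann1_ideal: "x \<in> carrier M \<Longrightarrow> ideal (ann1 x) R1"
  using ann1_cases D1.zeroideal D1.cgenideal_ideal D1.p_closed by (metis D1.nat_pow_closed)

lemma ann2_ideal: "x \<in> carrier M \<Longrightarrow> ideal (ann2 x) R2"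
  using ann2_cases D2.zeroideal D2.cgenideal_ideal D2.p_closed by (metis D2.nat_pow_closed)

lemma smult_eq_zero_iff:
  assumes x: "x \<in> carrier M" "x \<notin> Q" and r: "r \<in> carrier R"
  shows "r \<odot>\<^bsub>M\<^esub> x = \<zero>\<^bsub>M\<^esub> \<longleftrightarrow> fst r \<in> ann1 x \<and> snd r \<in> ann2 x"
proof -
  obtain a b where ab: "r = (a, b)" by (cases r)
  let ?y1 = "(a, \<zero>\<^bsub>R2\<^esub>) \<odot>\<^bsub>M\<^esub> x" and ?y2 = "(\<zero>\<^bsub>R1\<^esub>, b) \<odot>\<^bsub>M\<^esub> x"
  have sum: "r \<odot>\<^bsub>M\<^esub> x = ?y1 \<oplus>\<^bsub>M\<^esub> ?y2"
    if "(a, \<zero>\<^bsub>R2\<^esub>) \<in> carrier R" "(\<zero>\<^bsub>R1\<^esub>, b) \<in> carrier R"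
    using MM.smult_l_distr[OF that x(1)] r ab by simp
  show ?thesis
  proof
    assume z: "r \<odot>\<^bsub>M\<^esub> x = \<zero>\<^bsub>M\<^esub>"
    have "a \<in> PIdl\<^bsub>R1\<^esub> p1"
    proof (rule ccontr)
      assume "a \<notin> PIdl\<^bsub>R1\<^esub> p1"
      then have U: "r \<in> Units R" using pb_UnitsI r ab PIdl1_iff by auto
      then have "x = \<zero>\<^bsub>M\<^esub>" using MM.smult_Units_inv_cancel[OF U x(1)] z by simp
      then show False using x(2) MM.submodule_zero_closed[OF Q_submodule] by simp
    qed
    with r ab have split: "(a, \<zero>\<^bsub>R2\<^esub>) \<in> PIdl\<^bsub>R\<^esub> u1" "(\<zero>\<^bsub>R1\<^esub>, b) \<in> PIdl\<^bsub>R\<^esub> u2"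
      using PIdl1_split by auto
    then have c: "(a, \<zero>\<^bsub>R2\<^esub>) \<in> carrier R" "(\<zero>\<^bsub>R1\<^esub>, b) \<in> carrier R"
      unfolding PIdl_u1_eq PIdl_u2_eq by auto
    have y1: "?y1 \<in> smult_image M u1" and y2: "?y2 \<in> smult_image M u2"
      using MM.PIdl_smult_mem_smult_image[OF u1_closed split(1) x(1)]
        MM.PIdl_smult_mem_smult_image[OF u2_closed split(2) x(1)] .
    have y12: "?y1 \<oplus>\<^bsub>M\<^esub> ?y2 = \<zero>\<^bsub>M\<^esub>" using z sum[OF c] by simp
    then have "\<ominus>\<^bsub>M\<^esub> ?y2 = ?y1" using c x(1) by (intro MM.M.minus_equality) auto
    then have "?y1 \<in> smult_image M u2"
      using MM.submoduleE(3)[OF MM.smult_image_submodule[OF u2_closed] y2] by simp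
    then have "?y1 = \<zero>\<^bsub>M\<^esub>" using y1 smult_image_u1_Int_u2 by blast
    moreover from this have "?y2 = \<zero>\<^bsub>M\<^esub>" using y12 c x(1) by simp
    ultimately show "fst r \<in> ann1 x \<and> snd r \<in> ann2 x" using c ab unfolding ann1_def ann2_def by simp
  next
    assume "fst r \<in> ann1 x \<and> snd r \<in> ann2 x"
    then have "(a, \<zero>\<^bsub>R2\<^esub>) \<in> carrier R" "(\<zero>\<^bsub>R1\<^esub>, b) \<in> carrier R" "?y1 = \<zero>\<^bsub>M\<^esub>" "?y2 = \<zero>\<^bsub>M\<^esub>"
      using ab unfolding ann1_def ann2_def by auto
    then show "r \<odot>\<^bsub>M\<^esub> x = \<zero>\<^bsub>M\<^esub>" using sum by simp
  qed
qed

lemma mod_iso_pb_module: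
  assumes x: "x \<in> carrier M" and gen: "carrier M = cyclic_span R M x"
    and J1: "ideal J1 R1" and J2: "ideal J2 R2"
    and ann: "\<And>r. r \<in> carrier R \<Longrightarrow> r \<odot>\<^bsub>M\<^esub> x = \<zero>\<^bsub>M\<^esub> \<longleftrightarrow> fst r \<in> J1 \<and> snd r \<in> J2"
  shows "mod_iso R M (pb_module R1 R2 V1 V2 J1 J2)"
proof (rule MM.mod_iso_cyclicI[OF x gen])
  interpret J1: ideal J1 R1 by (rule J1)
  interpret J2: ideal J2 R2 by (rule J2)
  let ?\<phi> = "\<lambda>r. (J1 +>\<^bsub>R1\<^esub> fst r, J2 +>\<^bsub>R2\<^esub> snd r)"
  show "?\<phi> ` carrier R = carrier (pb_module R1 R2 V1 V2 J1 J2)"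
    unfolding pb_module_def by (force simp: pb_ring_def)
  show "?\<phi> (r \<oplus>\<^bsub>R\<^esub> s) = ?\<phi> r \<oplus>\<^bsub>pb_module R1 R2 V1 V2 J1 J2\<^esub> ?\<phi> s"
    if "r \<in> carrier R" "s \<in> carrier R" for r s
    using that pb_fst_closed pb_snd_closed
    by (simp add: pb_module_def J1.a_rcos_sum J2.a_rcos_sum)
  show "?\<phi> (s \<otimes>\<^bsub>R\<^esub> r) = s \<odot>\<^bsub>pb_module R1 R2 V1 V2 J1 J2\<^esub> ?\<phi> r"
    if "r \<in> carrier R" "s \<in> carrier R" for r s
    using that pb_fst_closed pb_snd_closed
    by (simp add: pb_module_def J1.rcoset_mult_add J2.rcoset_mult_add)
  show "?\<phi> r = ?\<phi> s \<longleftrightarrow> r \<odot>\<^bsub>M\<^esub> x = s \<odot>\<^bsub>M\<^esub> x"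
    if r: "r \<in> carrier R" and s: "s \<in> carrier R" for r s
  proof -
    have "r \<odot>\<^bsub>M\<^esub> x = s \<odot>\<^bsub>M\<^esub> x \<longleftrightarrow> fst (r \<ominus>\<^bsub>R\<^esub> s) \<in> J1 \<and> snd (r \<ominus>\<^bsub>R\<^esub> s) \<in> J2"
      using MM.smult_eq_smult_iff[OF r s x] ann MM.R.minus_closed[OF r s] by simp
    also have "\<dots> \<longleftrightarrow> ?\<phi> r = ?\<phi> s"
      using r s pb_fst_closed pb_snd_closed
        D1.quotient_eq_iff_same_a_r_cos[OF J1] D2.quotient_eq_iff_same_a_r_cos[OF J2]
      by simp
    finally show ?thesis by simp
  qed
qed

end

theorem theorem3p4:
  fixes R1 :: "'a ring" and R2 :: "'b ring" and Rbar :: "'c ring"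
    and V1 :: "'a \<Rightarrow> 'c" and V2 :: "'b \<Rightarrow> 'c"
    and p1 :: 'a and p2 :: 'b
    and M :: "('a \<times> 'b, 'm) module"
  assumes dvr1: "dvr R1" and dvr2: "dvr R2"
    and p1: "p1 \<in> carrier R1" "maximalideal (PIdl\<^bsub>R1\<^esub> p1) R1"
    and p2: "p2 \<in> carrier R2" "maximalideal (PIdl\<^bsub>R2\<^esub> p2) R2"
    and fld: "field Rbar"
    and V1: "V1 \<in> ring_hom R1 Rbar" "V1 ` carrier R1 = carrier Rbar"
            "a_kernel R1 Rbar V1 = PIdl\<^bsub>R1\<^esub> p1"
    and V2: "V2 \<in> ring_hom R2 Rbar" "V2 ` carrier R2 = carrier Rbar"
            "a_kernel R2 Rbar V2 = PIdl\<^bsub>R2\<^esub> p2"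
    and modM: "module (pb_ring R1 R2 V1 V2) M"
    and nonzero: "carrier M \<noteq> {\<zero>\<^bsub>M\<^esub>}"
    and indec: "indecomposable (pb_ring R1 R2 V1 V2) M"
    and sep: "separated R1 R2 (PIdl\<^bsub>R1\<^esub> p1) (PIdl\<^bsub>R2\<^esub> p2) (pb_ring R1 R2 V1 V2) M"
    and papm: "pap_multiplication_module (pb_ring R1 R2 V1 V2) M"
  shows "mod_iso (pb_ring R1 R2 V1 V2) M
           (pb_module R1 R2 V1 V2 {\<zero>\<^bsub>R1\<^esub>} {\<zero>\<^bsub>R2\<^esub>})
       \<or> (\<exists>(n::nat) (m::nat). n \<ge> 1 \<and> m \<ge> 1 \<and> mod_iso (pb_ring R1 R2 V1 V2) M
           (pb_module R1 R2 V1 V2 (PIdl\<^bsub>R1\<^esub> (p1 [^]\<^bsub>R1\<^esub> n)) (PIdl\<^bsub>R2\<^esub> (p2 [^]\<^bsub>R2\<^esub> m))))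
       \<or> (\<exists>m::nat. m \<ge> 1 \<and> mod_iso (pb_ring R1 R2 V1 V2) M
           (pb_module R1 R2 V1 V2 {\<zero>\<^bsub>R1\<^esub>} (PIdl\<^bsub>R2\<^esub> (p2 [^]\<^bsub>R2\<^esub> m))))
       \<or> (\<exists>n::nat. n \<ge> 1 \<and> mod_iso (pb_ring R1 R2 V1 V2) M
           (pb_module R1 R2 V1 V2 (PIdl\<^bsub>R1\<^esub> (p1 [^]\<^bsub>R1\<^esub> n)) {\<zero>\<^bsub>R2\<^esub>}))"
proof -
  interpret F: field Rbar by (rule fld)
  interpret pap_pullback R1 p1 R2 p2 Rbar V1 V2 M
  proof (intro pap_pullback.intro pap_pullback_axioms.intro uniformized_dvrI ring_hom_cring.intro
      ring_hom_cring_axioms.intro)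
    show "cring R1" "cring R2" using dvr1 dvr2 unfolding dvr_def
      by (simp_all add: principal_domain.axioms(1) domain.axioms(1))
  qed (use assms F.is_cring in auto)
  obtain x where x: "x \<in> carrier M" "x \<notin> Q" "carrier M = cyclic_span R M x"
    by (rule cyclic_generator)
  have "mod_iso R M (pb_module R1 R2 V1 V2 (ann1 x) (ann2 x))"
    using mod_iso_pb_module[OF x(1,3) ann1_ideal[OF x(1)] ann2_ideal[OF x(1)]]
      smult_eq_zero_iff[OF x(1,2)] by blast
  then show ?thesis using ann1_cases[OF x(1)] ann2_cases[OF x(1)] by auto
qed

end
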